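(* Let $\ell$ be a positive integer and let $x$ be a real number with $x > \ell/2$. Let $L_1,\dots,L_\ell$ be independent random variables, each with density $\rho_1(t)=\frac{\pi}{2}\operatorname{sech}^2(\pi t)$ on $\mathbb{R}$, and put $L=L_1+\cdots+L_\ell$. Then $$\mathbb{E}\left[\log\left(x-\tfrac{\ell}{2}+iL\right)\right] = -H_{\ell-1} + \frac{d^{\ell-1}}{dx^{\ell-1}}\left\{\binom{x-1}{\ell-1}\,\psi\!\left(x-\left\lfloor \tfrac{\ell}{2}\right\rfloor\right)\right\},$$ where $\log$ is the principal branch.
   Context: $H_n=1+\frac12+\cdots+\frac1n$ denotes the $n$-th harmonic number ($H_0=0$), $\psi=\Gamma'/\Gamma$ is the digamma function, and $\binom{x}{n}=\frac{x(x-1)\cdots(x-n+1)}{n!}$ is the generalized binomial coefficient. In the paper the left-hand side is denoted $\mathrm{eval}\{\log \mathfrak{B}^{(\ell)}(x)\}$ (the umbral evaluation of the logarithm of the sum of $\ell$ independent Bernoulli umbrae shifted by $x$); equivalently it equals $\int_{-\infty}^{\infty}\log(x-\tfrac{\ell}{2}+iu)\rho_\ell(u)\,du$ where $\rho_\ell$ is the $\ell$-fold convolution of $\rho_1$. *)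

theory Defs
  imports "HOL-Probability.Probability"
begin

definition rho1 :: "real \<Rightarrow> real" where
  "rho1 t = (pi / 2) / (cosh (pi * t))^2"

end

theory Submission
  imports Defs "HOL-Complex_Analysis.Complex_Analysis" "HOL-Real_Asymp.Real_Asymp"
begin

text \<open>
  For \<open>Re z > 0\<close>, Frullani's integral gives \<open>Ln z = \<integral>\<^sub>0\<^sup>\<infinity> (exp (-t) - exp (-t z)) / t dt\<close>.
  Taking \<open>z = x - l/2 + i L\<close> and exchanging the integrals, \<open>L\<close> only enters through its
  characteristic function, which is \<open>((t/2) / sinh (t/2))^l\<close>. The integrand becomes
  \<open>(exp (-t) - exp (-t x) q(t)^l) / t\<close> with \<open>q(t) = t / (1 - exp (-t))\<close>, the Bernoulli
  generating function; for \<open>l = 1\<close> this is Binet's integral for \<open>\<psi>(x)\<close>. Integration by parts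
  gives two recurrences in \<open>l\<close>, one at \<open>x\<close> and one shifting \<open>x\<close> by 1, and the closed form
  satisfies both by the Pascal-type identities of the binomial coefficient, for every shift
  \<open>c \<le> l - 1\<close> of the argument of \<open>\<psi>\<close>; the theorem uses \<open>c = \<lfloor>l/2\<rfloor>\<close>.
\<close>

section \<open>Exponential integrals and differentiation under the integral sign\<close>

lemma integral_exp_neg_Ioi:
  fixes c :: real assumes c: "c > 0"
  shows "set_integrable lborel {0<..} (\<lambda>t. exp (- (c * t)))"
    and "(LBINT t:{0<..}. exp (- (c * t))) = 1 / c"
proof -
  let ?F = "\<lambda>t. - exp (- (c * t)) / c"
  have D: "\<And>x. (?F has_real_derivative exp (- (c * x))) (at x)"
    using c by (auto intro!: derivative_eq_intros)
  have *: "((\<lambda>t. exp (- (c * t))) \<longlongrightarrow> 0) at_top"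
    using c
    by (auto intro!: exp_at_bot[THEN filterlim_compose] filterlim_tendsto_pos_mult_at_top filterlim_ident
             simp: filterlim_uminus_at_bot mult.commute[of _ c])
  have A: "((?F \<circ> real_of_ereal) \<longlongrightarrow> - 1 / c) (at_right 0)"
    using c by (auto simp: zero_ereal_def ereal_tendsto_simps intro!: tendsto_eq_intros)
  have B: "((?F \<circ> real_of_ereal) \<longlongrightarrow> 0) (at_left \<infinity>)"
    unfolding ereal_tendsto_simps
    using tendsto_divide[OF tendsto_minus[OF *] tendsto_const[of c]] c by (simp add: o_def)
  note R = interval_integral_FTC_nonneg[of 0 \<infinity> ?F "\<lambda>t. exp (- (c * t))", OF _ D _ _ A B]
  from R show "set_integrable lborel {0<..} (\<lambda>t. exp (- (c * t)))"
    by (simp add: zero_ereal_def[symmetric] einterval_def greaterThan_def)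
  from R show "(LBINT t:{0<..}. exp (- (c * t))) = 1 / c"
    by (simp add: interval_lebesgue_integral_0_infty)
qed

lemma integral_cexp_neg_Ioi:
  fixes z :: complex assumes z: "Re z > 0"
  shows "set_integrable lborel {0<..} (\<lambda>t. exp (- (of_real t * z)))"
    and "(LINT t:{0<..}|lborel. exp (- (of_real t * z))) = 1 / z"
proof -
  have zne: "z \<noteq> 0" using z by auto
  show I: "set_integrable lborel {0<..} (\<lambda>t. exp (- (of_real t * z)))"
  proof (rule set_integrable_bound[OF integral_exp_neg_Ioi(1)[OF z]])
    show "set_borel_measurable lborel {0<..} (\<lambda>t. exp (- (of_real t * z)))"
      unfolding set_borel_measurable_def by measurable
    show "AE x in lborel. x \<in> {0<..} \<longrightarrow> norm (exp (- (complex_of_real x * z))) \<le> norm (exp (- (Re z * x)))"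
      by (intro AE_I2) (simp add: mult.commute)
  qed
  let ?F = "\<lambda>t::real. - exp (- (of_real t * z)) / z"
  have D: "(?F has_vector_derivative exp (- (of_real x * z))) (at x)" for x
  proof -
    have "((\<lambda>w. - exp (- (w * z)) / z) has_field_derivative exp (- (of_real x * z))) (at (of_real x))"
      using zne by (auto intro!: derivative_eq_intros)
    thus ?thesis by (rule has_vector_derivative_real_field)
  qed
  have A: "((?F \<circ> real_of_ereal) \<longlongrightarrow> - 1 / z) (at_right 0)"
    using zne by (auto simp: zero_ereal_def ereal_tendsto_simps intro!: tendsto_eq_intros)
  have *: "((\<lambda>t. exp (- (Re z * t))) \<longlongrightarrow> 0) at_top"
    using z
    by (auto intro!: exp_at_bot[THEN filterlim_compose] filterlim_tendsto_pos_mult_at_top filterlim_ident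
             simp: filterlim_uminus_at_bot mult.commute[of _ "Re z"])
  have B0: "(?F \<longlongrightarrow> 0) at_top"
  proof -
    have "((\<lambda>t. exp (- (Re z * t)) / norm z) \<longlongrightarrow> 0 / norm z) at_top"
      by (intro tendsto_divide * tendsto_const) (use zne in auto)
    moreover have "norm (?F t) = exp (- (Re z * t)) / norm z" for t
      by (simp add: norm_divide mult.commute)
    ultimately show ?thesis by (subst tendsto_norm_zero_iff[symmetric]) simp
  qed
  have B: "((?F \<circ> real_of_ereal) \<longlongrightarrow> 0) (at_left \<infinity>)"
    unfolding ereal_tendsto_simps by (rule B0)
  have "(LBINT t=0..\<infinity>. exp (- (of_real t * z))) = 0 - (- 1 / z)"
    by (rule interval_integral_FTC_integrable[OF _ D _ _ A B])
       (use I in \<open>auto simp: interval_lebesgue_integral_0_infty zero_ereal_def[symmetric] einterval_def greaterThan_def\<close>)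
  thus "(LINT t:{0<..}|lborel. exp (- (of_real t * z))) = 1 / z"
    by (simp add: interval_lebesgue_integral_0_infty)
qed

lemma power_div_fact_le_exp:
  fixes u :: real assumes u: "u \<ge> 0"
  shows "u ^ n / fact n \<le> exp u"
proof -
  have "(\<Sum>k\<in>{n}. u ^ k / fact k) \<le> (\<Sum>k. u ^ k / fact k)"
    by (rule sum_le_suminf) (use summable_exp_generic[of u] u in \<open>auto simp: divide_inverse ac_simps\<close>)
  thus ?thesis by (simp add: exp_def divide_inverse ac_simps)
qed

lemma one_plus_power_le_exp:
  fixes c t :: real assumes c: "c > 0" and t: "t \<ge> 0"
  shows "(1 + t) ^ n \<le> (fact n * (2 / c) ^ n * exp (c / 2)) * exp (c / 2 * t)"
proof -
  have "((1 + t) * (c / 2)) ^ n / fact n \<le> exp ((1 + t) * (c / 2))"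
    by (rule power_div_fact_le_exp) (use c t in auto)
  hence "((1 + t) * (c / 2)) ^ n \<le> fact n * exp ((1 + t) * (c / 2))"
    by (simp add: divide_le_eq mult.commute)
  hence "(1 + t) ^ n * (c / 2) ^ n \<le> fact n * exp ((1 + t) * (c / 2))"
    by (simp only: power_mult_distrib)
  hence "(1 + t) ^ n \<le> fact n * exp ((1 + t) * (c / 2)) / (c / 2) ^ n"
    using c by (simp add: le_divide_eq)
  also have "\<dots> = (fact n * (2 / c) ^ n * exp (c / 2)) * exp (c / 2 * t)"
    by (simp add: algebra_simps exp_add[symmetric] power_divide)
  finally show ?thesis .
qed

lemma set_integrable_poly_exp_neg:
  fixes c :: real assumes c: "c > 0"
  shows "set_integrable lborel {0<..} (\<lambda>t. (1 + t) ^ n * exp (- (c * t)))"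
proof -
  define C where "C = fact n * (2 / c) ^ n * exp (c / 2)"
  have "set_integrable lborel {0<..} (\<lambda>t. C * exp (- (c / 2 * t)))"
    using integrable_mult_left[OF integral_exp_neg_Ioi(1)[of "c/2", unfolded set_integrable_def], of C] c
    unfolding set_integrable_def by (simp add: mult_ac)
  thus ?thesis
  proof (rule set_integrable_bound)
    show "set_borel_measurable lborel {0<..} (\<lambda>t. (1 + t) ^ n * exp (- (c * t)))"
      unfolding set_borel_measurable_def by measurable
    show "AE x in lborel. x \<in> {0<..} \<longrightarrow> norm ((1 + x) ^ n * exp (- (c * x))) \<le> norm (C * exp (- (c / 2 * x)))"
    proof (intro AE_I2 impI)
      fix x :: real assume x: "x \<in> {0<..}"
      have "(1 + x) ^ n * exp (- (c * x)) \<le> (C * exp (c / 2 * x)) * exp (- (c * x))"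
        using one_plus_power_le_exp[OF c, of x n] x by (intro mult_right_mono) (auto simp: C_def)
      also have "\<dots> = C * exp (- (c / 2 * x))"
        by (simp add: mult.assoc exp_add[symmetric])
      finally show "norm ((1 + x) ^ n * exp (- (c * x))) \<le> norm (C * exp (- (c / 2 * x)))"
        using x by (simp add: C_def)
    qed
  qed
qed

lemma tendsto_integral_difference_quotient:
  fixes f f' :: "'b::{real_normed_field,banach,second_countable_topology} \<Rightarrow> 'a \<Rightarrow> 'b"
  assumes r: "0 < r"
    and X: "\<And>n. X n \<in> ball z0 r - {z0}" and X_lim: "X \<longlonglongrightarrow> z0"
    and int: "\<And>z. z \<in> ball z0 r \<Longrightarrow> integrable M (f z)"
    and der: "\<And>z t. z \<in> ball z0 r \<Longrightarrow> t \<in> space M \<Longrightarrow> ((\<lambda>z. f z t) has_field_derivative f' z t) (at z)"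
    and bnd: "\<And>z t. z \<in> ball z0 r \<Longrightarrow> t \<in> space M \<Longrightarrow> norm (f' z t) \<le> g t"
    and g: "integrable M g"
    and meas: "f' z0 \<in> borel_measurable M"
  shows "(\<lambda>n. \<integral>t. (f (X n) t - f z0 t) / (X n - z0) \<partial>M) \<longlonglongrightarrow> (\<integral>t. f' z0 t \<partial>M)"
proof (rule integral_dominated_convergence[where w = g])
  have z0: "z0 \<in> ball z0 r" using r by simp
  show "f' z0 \<in> borel_measurable M" "integrable M g" by (fact meas, fact g)
  show "(\<lambda>t. (f (X n) t - f z0 t) / (X n - z0)) \<in> borel_measurable M" for n
    using int[of "X n"] int[OF z0] X[of n] by (intro borel_measurable_divide borel_measurable_diff) auto
  show "AE t in M. (\<lambda>n. (f (X n) t - f z0 t) / (X n - z0)) \<longlonglongrightarrow> f' z0 t"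
  proof (rule AE_I2)
    fix t assume t: "t \<in> space M"
    have "((\<lambda>y. (f y t - f z0 t) / (y - z0)) \<longlongrightarrow> f' z0 t) (at z0)"
      using der[OF z0 t] unfolding has_field_derivative_iff .
    moreover have "\<forall>n. X n \<in> UNIV - {z0}" using X by auto
    ultimately have "((\<lambda>y. (f y t - f z0 t) / (y - z0)) \<circ> X) \<longlonglongrightarrow> f' z0 t"
      using X_lim unfolding tendsto_at_iff_sequentially by auto
    thus "(\<lambda>n. (f (X n) t - f z0 t) / (X n - z0)) \<longlonglongrightarrow> f' z0 t"
      by (simp add: o_def)
  qed
  show "AE t in M. norm ((f (X n) t - f z0 t) / (X n - z0)) \<le> g t" for n
  proof (rule AE_I2)
    fix t assume t: "t \<in> space M"
    have Xn: "X n \<in> ball z0 r" "X n \<noteq> z0" using X[of n] by auto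
    have "norm (f (X n) t - f z0 t) \<le> g t * norm (X n - z0)"
    proof (rule field_differentiable_bound[of "ball z0 r" "\<lambda>z. f z t" "\<lambda>z. f' z t"])
      show "convex (ball z0 r)" by simp
      show "((\<lambda>z. f z t) has_field_derivative f' z t) (at z within ball z0 r)" if "z \<in> ball z0 r" for z
        using der[OF that t] by (rule has_field_derivative_at_within)
      show "norm (f' z t) \<le> g t" if "z \<in> ball z0 r" for z using bnd[OF that t] .
    qed (use Xn z0 in auto)
    hence "norm (f (X n) t - f z0 t) / norm (X n - z0) \<le> g t"
      using Xn by (simp add: divide_le_eq)
    thus "norm ((f (X n) t - f z0 t) / (X n - z0)) \<le> g t"
      by (simp add: norm_divide)
  qed
qed

lemma has_field_derivative_integral_param:
  fixes f f' :: "'b::{real_normed_field,banach,second_countable_topology} \<Rightarrow> 'a \<Rightarrow> 'b"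
  assumes r: "0 < r"
    and int: "\<And>z. z \<in> ball z0 r \<Longrightarrow> integrable M (f z)"
    and der: "\<And>z t. z \<in> ball z0 r \<Longrightarrow> t \<in> space M \<Longrightarrow> ((\<lambda>z. f z t) has_field_derivative f' z t) (at z)"
    and bnd: "\<And>z t. z \<in> ball z0 r \<Longrightarrow> t \<in> space M \<Longrightarrow> norm (f' z t) \<le> g t"
    and g: "integrable M g"
    and meas: "f' z0 \<in> borel_measurable M"
  shows "((\<lambda>z. \<integral>t. f z t \<partial>M) has_field_derivative (\<integral>t. f' z0 t \<partial>M)) (at z0)"
  unfolding has_field_derivative_iff tendsto_at_iff_sequentially
proof (intro allI impI)
  fix X assume X: "\<forall>i. X i \<in> UNIV - {z0}" and X_lim: "X \<longlonglongrightarrow> z0"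
  have z0: "z0 \<in> ball z0 r" using r by simp
  from X_lim r have "eventually (\<lambda>n. X n \<in> ball z0 r) sequentially"
    by (intro eventually_nhds_in_open[THEN filterlim_iff[THEN iffD1, OF X_lim, rule_format]]) auto
  then obtain N where N: "\<And>n. n \<ge> N \<Longrightarrow> X n \<in> ball z0 r"
    by (auto simp: eventually_sequentially)
  have XN: "X (n + N) \<in> ball z0 r - {z0}" for n using N[of "n + N"] X by auto
  have quotient: "((\<lambda>y. ((\<integral>t. f y t \<partial>M) - (\<integral>t. f z0 t \<partial>M)) / (y - z0)) \<circ> X) (n + N)
      = (\<integral>t. (f (X (n + N)) t - f z0 t) / (X (n + N) - z0) \<partial>M)" for n
  proof -
    have "(\<integral>t. (f (X (n + N)) t - f z0 t) / (X (n + N) - z0) \<partial>M)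
        = (\<integral>t. (f (X (n + N)) t - f z0 t) \<partial>M) / (X (n + N) - z0)"
      by (rule integral_divide_zero)
    also have "(\<integral>t. (f (X (n + N)) t - f z0 t) \<partial>M) = (\<integral>t. f (X (n + N)) t \<partial>M) - (\<integral>t. f z0 t \<partial>M)"
      using int[of "X (n + N)"] int[OF z0] XN[of n] by (intro Bochner_Integration.integral_diff) auto
    finally show ?thesis by (simp only: o_def)
  qed
  have "(\<lambda>n. \<integral>t. (f (X (n + N)) t - f z0 t) / (X (n + N) - z0) \<partial>M) \<longlonglongrightarrow> (\<integral>t. f' z0 t \<partial>M)"
    by (rule tendsto_integral_difference_quotient[OF r XN LIMSEQ_ignore_initial_segment[OF X_lim]
          int der bnd g meas])
  hence "(\<lambda>n. ((\<lambda>y. ((\<integral>t. f y t \<partial>M) - (\<integral>t. f z0 t \<partial>M)) / (y - z0)) \<circ> X) (n + N))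
      \<longlonglongrightarrow> (\<integral>t. f' z0 t \<partial>M)"
    by (simp only: quotient)
  thus "((\<lambda>y. ((\<integral>t. f y t \<partial>M) - (\<integral>t. f z0 t \<partial>M)) / (y - z0)) \<circ> X) \<longlonglongrightarrow> (\<integral>t. f' z0 t \<partial>M)"
    by (rule LIMSEQ_offset)
qed

section \<open>Frullani's integral for the logarithm\<close>

definition frullani :: "complex \<Rightarrow> real \<Rightarrow> complex" where
  "frullani z t = (exp (- of_real t) - exp (- (of_real t * z))) / of_real t"

lemma frullani_of_real: "frullani (of_real x) t = of_real ((exp (- t) - exp (- (t * x))) / t)"
  by (simp add: frullani_def exp_of_real[symmetric])

lemma norm_exp_neg_diff_le:
  fixes w1 w2 :: complex and t c :: real
  assumes t: "t \<ge> 0" and c1: "c \<le> Re w1" and c2: "c \<le> Re w2"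
  shows "norm (exp (- (of_real t * w1)) - exp (- (of_real t * w2))) \<le> t * exp (- (c * t)) * norm (w1 - w2)"
proof (rule field_differentiable_bound[of "{w. Re w \<ge> c}" "\<lambda>w. exp (- (of_real t * w))" "\<lambda>w. - of_real t * exp (- (of_real t * w))"])
  show "convex {w. c \<le> Re w}" by (rule convex_halfspace_Re_ge)
  show "((\<lambda>w. exp (- (of_real t * w))) has_field_derivative - of_real t * exp (- (of_real t * w))) (at w within {w. c \<le> Re w})" for w
    by (auto intro!: derivative_eq_intros)
  show "norm (- of_real t * exp (- (of_real t * w))) \<le> t * exp (- (c * t))" if "w \<in> {w. c \<le> Re w}" for w
  proof -
    have "norm (- of_real t * exp (- (of_real t * w))) = t * exp (- (t * Re w))"
      using t by (simp add: norm_mult)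
    also have "\<dots> \<le> t * exp (- (c * t))"
      using that t mult_right_mono[of c "Re w" t] by (intro mult_left_mono) (auto simp: mult.commute)
    finally show ?thesis .
  qed
qed (use c1 c2 in auto)

lemma norm_frullani_le:
  assumes "t > 0" "c \<le> 1" "c \<le> Re z"
  shows "norm (frullani z t) \<le> exp (- (c * t)) * norm (z - 1)"
proof -
  have "norm (exp (- (of_real t * 1)) - exp (- (of_real t * z))) \<le> t * exp (- (c * t)) * norm (1 - z)"
    by (rule norm_exp_neg_diff_le) (use assms in auto)
  thus ?thesis using assms(1)
    by (simp add: frullani_def norm_divide norm_minus_commute field_simps)
qed

lemma set_integrable_frullani:
  assumes "Re z > 0"
  shows "set_integrable lborel {0<..} (frullani z)"
proof -
  define c where "c = min 1 (Re z)"
  have c: "c > 0" "c \<le> 1" "c \<le> Re z" using assms by (auto simp: c_def)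
  have "set_integrable lborel {0<..} (\<lambda>t. exp (- (c * t)) * norm (z - 1))"
    using integrable_mult_left[OF integral_exp_neg_Ioi(1)[OF c(1), unfolded set_integrable_def], of "cmod (z - 1)"]
    unfolding set_integrable_def by (simp add: mult_ac)
  thus ?thesis
  proof (rule set_integrable_bound)
    show "set_borel_measurable lborel {0<..} (frullani z)"
      unfolding set_borel_measurable_def frullani_def by measurable
    show "AE x in lborel. x \<in> {0<..} \<longrightarrow> norm (frullani z x) \<le> norm (exp (- (c * x)) * cmod (z - 1))"
      using norm_frullani_le[OF _ c(2,3)] by (intro AE_I2) auto
  qed
qed

lemma integral_norm_frullani_le:
  assumes c: "0 < c" "c \<le> 1" "c \<le> Re z"
  shows "(\<integral>t. norm (indicator {0<..} t *\<^sub>R frullani z t) \<partial>lborel) \<le> norm (z - 1) / c"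
proof -
  have bound_int: "integrable lborel (\<lambda>t. norm (z - 1) * (indicator {0<..} t *\<^sub>R exp (- (c * t))))"
    using integral_exp_neg_Ioi(1)[OF c(1)] unfolding set_integrable_def by simp
  have "(\<integral>t. norm (indicator {0<..} t *\<^sub>R frullani z t) \<partial>lborel)
      \<le> (\<integral>t. norm (z - 1) * (indicator {0<..} t *\<^sub>R exp (- (c * t))) \<partial>lborel)"
  proof (rule integral_mono[OF _ bound_int])
    show "integrable lborel (\<lambda>t. norm (indicator {0<..} t *\<^sub>R frullani z t))"
      using c by (intro integrable_norm set_integrable_frullani[unfolded set_integrable_def]) simp
    show "norm (indicator {0<..} t *\<^sub>R frullani z t) \<le> norm (z - 1) * (indicator {0<..} t *\<^sub>R exp (- (c * t)))"
      for t :: real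
      using norm_frullani_le[of t c z] c by (cases "t > 0") (simp_all add: mult.commute)
  qed
  also have "\<dots> = norm (z - 1) / c"
    using integral_exp_neg_Ioi(2)[OF c(1)] by (simp add: set_lebesgue_integral_def)
  finally show ?thesis .
qed

lemma has_field_derivative_integral_frullani:
  assumes z0: "Re z0 > 0"
  shows "((\<lambda>z. LINT t:{0<..}|lborel. frullani z t) has_field_derivative 1 / z0) (at z0)"
proof -
  define r where "r = Re z0 / 2"
  have r: "r > 0" using z0 by (simp add: r_def)
  have ball_Re: "Re w > r" if "w \<in> ball z0 r" for w
  proof -
    have "\<bar>Re z0 - Re w\<bar> \<le> norm (z0 - w)" using abs_Re_le_cmod[of "z0 - w"] by simp
    also have "\<dots> < r" using that by (simp add: dist_norm)
    finally show ?thesis unfolding r_def by linarith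
  qed
  have "((\<lambda>w. \<integral>t. indicator {0<..} t *\<^sub>R frullani w t \<partial>lborel) has_field_derivative
          (\<integral>t. indicator {0<..} t *\<^sub>R exp (- (of_real t * z0)) \<partial>lborel)) (at z0)"
  proof (rule has_field_derivative_integral_param[OF r, where g = "\<lambda>t. indicator {0<..} t *\<^sub>R exp (- (r * t))"])
    fix w assume w: "w \<in> ball z0 r"
    show "integrable lborel (\<lambda>t. indicator {0<..} t *\<^sub>R frullani w t)"
      using set_integrable_frullani[of w] ball_Re[OF w] r unfolding set_integrable_def by auto
    fix t :: real
    show "((\<lambda>w. indicator {0<..} t *\<^sub>R frullani w t) has_field_derivative indicator {0<..} t *\<^sub>R exp (- (of_real t * w))) (at w)"
    proof (cases "t > 0")
      case True
      have "((\<lambda>w. frullani w t) has_field_derivative exp (- (of_real t * w))) (at w)"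
        unfolding frullani_def using True by (auto intro!: derivative_eq_intros simp: field_simps)
      thus ?thesis using True by simp
    qed simp
    show "norm (indicator {0<..} t *\<^sub>R exp (- (of_real t * w))) \<le> indicator {0<..} t *\<^sub>R exp (- (r * t))"
      using ball_Re[OF w] by (auto simp: indicator_def mult.commute mult_left_mono)
  next
    show "integrable lborel (\<lambda>t. indicator {0<..} t *\<^sub>R exp (- (r * t)))"
      using integral_exp_neg_Ioi(1)[OF r] unfolding set_integrable_def .
    show "(\<lambda>t. indicator {0<..} t *\<^sub>R exp (- (of_real t * z0))) \<in> borel_measurable lborel"
      by measurable
  qed
  moreover have "(\<integral>t. indicator {0<..} t *\<^sub>R exp (- (of_real t * z0)) \<partial>lborel) = 1 / z0"
    using integral_cexp_neg_Ioi(2)[OF z0] by (simp add: set_lebesgue_integral_def)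
  ultimately show ?thesis unfolding set_lebesgue_integral_def by simp
qed

text \<open>Both sides are holomorphic on the right half-plane with derivative \<open>1/z\<close> and vanish at \<open>z = 1\<close>.\<close>

lemma integral_frullani_eq_Ln:
  assumes "Re z > 0"
  shows "(LINT t:{0<..}|lborel. frullani z t) = Ln z"
proof -
  define H where "H = {w::complex. Re w > 0}"
  define \<Phi> where "\<Phi> w = (LINT t:{0<..}|lborel. frullani w t)" for w
  have "(\<lambda>w. \<Phi> w - Ln w) constant_on H"
  proof (rule has_field_derivative_0_imp_constant_on)
    show "connected H" unfolding H_def by (simp add: convex_connected convex_halfspace_Re_gt)
    show "open H" unfolding H_def by (simp add: open_halfspace_Re_gt)
    fix w assume w: "w \<in> H"
    have "w \<notin> \<real>\<^sub>\<le>\<^sub>0" using w by (auto simp: H_def complex_nonpos_Reals_iff)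
    hence "((\<lambda>w. \<Phi> w - Ln w) has_field_derivative 1 / w - inverse w) (at w)"
      using w unfolding \<Phi>_def H_def
      by (intro DERIV_diff has_field_derivative_integral_frullani has_field_derivative_Ln) auto
    thus "((\<lambda>w. \<Phi> w - Ln w) has_field_derivative 0) (at w)" by (simp add: field_simps)
  qed
  then obtain k where k: "\<And>w. w \<in> H \<Longrightarrow> \<Phi> w - Ln w = k" by (auto simp: constant_on_def)
  have "\<Phi> 1 = 0" by (simp add: \<Phi>_def frullani_def)
  hence "k = 0" using k[of 1] by (simp add: H_def)
  thus ?thesis using k[of z] assms by (simp add: H_def \<Phi>_def)
qed

lemma integral_frullani_eq_ln:
  fixes x :: real
  assumes x: "x > 0"
  shows "set_integrable lborel {0<..} (\<lambda>t. (exp (- t) - exp (- (t * x))) / t)"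
    and "(LBINT t:{0<..}. (exp (- t) - exp (- (t * x))) / t) = ln x"
proof -
  have I: "set_integrable lborel {0<..} (frullani (of_real x))"
    using set_integrable_frullani[of "of_real x"] x by simp
  have e: "(\<lambda>t. indicator {0<..} t *\<^sub>R complex_of_real ((exp (- t) - exp (- (t * x))) / t))
        = (\<lambda>t. complex_of_real (indicator {0<..} t *\<^sub>R ((exp (- t) - exp (- (t * x))) / t)))"
    by (auto simp: indicator_def)
  from I show "set_integrable lborel {0<..} (\<lambda>t. (exp (- t) - exp (- (t * x))) / t)"
    unfolding set_integrable_def frullani_of_real e complex_of_real_integrable_eq .
  have "complex_of_real (LBINT t:{0<..}. (exp (- t) - exp (- (t * x))) / t) = Ln (of_real x)"
    using integral_frullani_eq_Ln[of "of_real x"] x unfolding frullani_of_real set_integral_complex_of_real by simp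
  also have "\<dots> = of_real (ln x)" using x by (simp add: Ln_of_real)
  finally show "(LBINT t:{0<..}. (exp (- t) - exp (- (t * x))) / t) = ln x" by simp
qed

lemma abs_exp_neg_diff_div_le:
  fixes t x c :: real assumes "t > 0" "c \<le> 1" "c \<le> x"
  shows "\<bar>exp (- t) - exp (- (t * x))\<bar> / t \<le> exp (- (c * t)) * \<bar>x - 1\<bar>"
proof -
  have "norm (frullani (of_real x) t) \<le> exp (- (c * t)) * norm (complex_of_real x - 1)"
    by (rule norm_frullani_le) (use assms in auto)
  moreover have "norm (complex_of_real x - 1) = \<bar>x - 1\<bar>"
    by (metis norm_of_real of_real_1 of_real_diff)
  ultimately have "\<bar>(exp (- t) - exp (- (t * x))) / t\<bar> \<le> exp (- (c * t)) * \<bar>x - 1\<bar>"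
    by (metis frullani_of_real norm_of_real)
  thus ?thesis using assms(1) by (simp add: abs_divide)
qed

section \<open>Laplace-type integrals built from the Bernoulli generating function\<close>

text \<open>\<open>bernoulli_gf\<close> is the exponential generating function of the Bernoulli numbers with
  \<open>B\<^sub>1 = 1/2\<close>.\<close>

definition bernoulli_gf :: "real \<Rightarrow> real" where "bernoulli_gf t = t / (1 - exp (- t))"

lemma one_minus_exp_neg_pos: "(t::real) > 0 \<Longrightarrow> 0 < 1 - exp (- t)"
  using exp_less_cancel_iff[of "-t" 0] by simp

lemma bernoulli_gf_ge_1: "t > 0 \<Longrightarrow> 1 \<le> bernoulli_gf t"
  unfolding bernoulli_gf_def using exp_ge_add_one_self[of "-t"] by (simp add: le_divide_eq)

lemma bernoulli_gf_le: "t > 0 \<Longrightarrow> bernoulli_gf t \<le> 1 + t"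
proof -
  assume t: "t > 0"
  have "1 + t \<le> exp t" by (rule exp_ge_add_one_self)
  hence "exp (-t) * (1 + t) \<le> 1" by (simp add: exp_minus field_simps)
  hence "t \<le> (1 + t) * (1 - exp (- t))" by (simp add: algebra_simps)
  thus ?thesis unfolding bernoulli_gf_def using t by (simp add: divide_le_eq)
qed

lemma bernoulli_gf_minus_1_le: "t > 0 \<Longrightarrow> (bernoulli_gf t - 1) / t \<le> 1"
  using bernoulli_gf_le[of t] by (simp add: divide_le_eq)

lemma bernoulli_gf_deriv:
  assumes t: "t > 0"
  shows "(bernoulli_gf has_real_derivative (bernoulli_gf t - exp (- t) * bernoulli_gf t ^ 2) / t) (at t)"
proof -
  have ne: "1 - exp (- t) \<noteq> 0" using one_minus_exp_neg_pos[OF t] by simp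
  have "(bernoulli_gf has_real_derivative ((1 - exp (- t)) - t * exp (- t)) / (1 - exp (- t)) ^ 2) (at t)"
    unfolding bernoulli_gf_def[abs_def] using ne
    by (auto intro!: derivative_eq_intros simp: power2_eq_square field_simps)
  moreover have "((1 - exp (- t)) - t * exp (- t)) / (1 - exp (- t)) ^ 2 = (bernoulli_gf t - exp (- t) * bernoulli_gf t ^ 2) / t"
  proof -
    have alg: "(u - t * E) / u ^ 2 = (t / u - E * (t / u) ^ 2) / t" if "u \<noteq> 0" "t \<noteq> 0" for u E :: real
      using that by (simp add: power2_eq_square field_simps)
    show ?thesis unfolding bernoulli_gf_def using alg[OF ne] t by simp
  qed
  ultimately show ?thesis by simp
qed

lemma isCont_bernoulli_gf: "t > 0 \<Longrightarrow> isCont bernoulli_gf t"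
  unfolding bernoulli_gf_def[abs_def] using one_minus_exp_neg_pos[of t] by (auto intro!: continuous_intros)

lemma bernoulli_gf_tendsto_0: "(bernoulli_gf \<longlongrightarrow> 1) (at_right 0)"
  unfolding bernoulli_gf_def[abs_def] by real_asymp

lemma bernoulli_gf_mult: "t > 0 \<Longrightarrow> bernoulli_gf t * (1 - exp (- t)) = t"
  unfolding bernoulli_gf_def using one_minus_exp_neg_pos[of t] by simp

lemma power_minus_1_le:
  fixes a :: real assumes "a \<ge> 1"
  shows "a ^ k - 1 \<le> real k * (a - 1) * a ^ k"
proof (induction k)
  case (Suc k)
  have "a ^ Suc k - 1 = a * (a ^ k - 1) + (a - 1)" by (simp add: algebra_simps)
  also have "\<dots> \<le> a * (real k * (a - 1) * a ^ k) + (a - 1) * a ^ Suc k"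
  proof (intro add_mono mult_left_mono)
    show "a ^ k - 1 \<le> real k * (a - 1) * a ^ k" by (rule Suc)
    have "(a - 1) * 1 \<le> (a - 1) * a ^ Suc k"
      using assms by (intro mult_left_mono one_le_power) auto
    thus "a - 1 \<le> (a - 1) * a ^ Suc k" by simp
  qed (use assms in auto)
  also have "\<dots> = real (Suc k) * (a - 1) * a ^ Suc k" by (simp add: algebra_simps)
  finally show ?case .
qed simp

definition log_integrand :: "nat \<Rightarrow> real \<Rightarrow> real \<Rightarrow> real" where
  "log_integrand n x t = (exp (- t) - exp (- (t * x)) * bernoulli_gf t ^ Suc n) / t"
definition inv_integrand :: "nat \<Rightarrow> real \<Rightarrow> real \<Rightarrow> real" where
  "inv_integrand n y t = exp (- (t * y)) * bernoulli_gf t ^ n"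
definition log_integral :: "nat \<Rightarrow> real \<Rightarrow> real" where
  "log_integral n x = (LBINT t:{0<..}. log_integrand n x t)"
definition inv_integral :: "nat \<Rightarrow> real \<Rightarrow> real" where
  "inv_integral n y = (LBINT t:{0<..}. inv_integrand n y t)"

lemma abs_log_integrand_le:
  assumes t: "t > 0" and x: "x > 0"
  shows "\<bar>log_integrand n x t\<bar> \<le> exp (- (min 1 x * t)) * \<bar>x - 1\<bar> + real (Suc n) * ((1 + t) ^ Suc n * exp (- (x * t)))"
proof -
  have qq: "1 \<le> bernoulli_gf t" using bernoulli_gf_ge_1[OF t] .
  have "log_integrand n x t = (exp (- t) - exp (- (t * x))) / t + exp (- (t * x)) * ((1 - bernoulli_gf t ^ Suc n) / t)"
    unfolding log_integrand_def using t by (simp add: field_simps)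
  hence "\<bar>log_integrand n x t\<bar> \<le> \<bar>exp (- t) - exp (- (t * x))\<bar> / t + exp (- (t * x)) * ((bernoulli_gf t ^ Suc n - 1) / t)"
  proof -
    assume eq: "log_integrand n x t = (exp (- t) - exp (- (t * x))) / t + exp (- (t * x)) * ((1 - bernoulli_gf t ^ Suc n) / t)"
    have "1 \<le> bernoulli_gf t ^ Suc n" using qq by (rule one_le_power)
    thus ?thesis unfolding eq using t
      by (intro order.trans[OF abs_triangle_ineq]) (simp add: abs_mult abs_divide)
  qed
  also have "\<bar>exp (- t) - exp (- (t * x))\<bar> / t \<le> exp (- (min 1 x * t)) * \<bar>x - 1\<bar>"
    by (rule abs_exp_neg_diff_div_le) (use t in auto)
  also have "(bernoulli_gf t ^ Suc n - 1) / t \<le> real (Suc n) * (1 + t) ^ Suc n"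
  proof -
    have "(bernoulli_gf t ^ Suc n - 1) / t \<le> (real (Suc n) * (bernoulli_gf t - 1) * bernoulli_gf t ^ Suc n) / t"
      using power_minus_1_le[OF qq, of "Suc n"] t by (intro divide_right_mono) auto
    also have "\<dots> = real (Suc n) * ((bernoulli_gf t - 1) / t) * bernoulli_gf t ^ Suc n" by simp
    also have "\<dots> \<le> real (Suc n) * 1 * (1 + t) ^ Suc n"
      using bernoulli_gf_minus_1_le[OF t] bernoulli_gf_le[OF t] qq t
      by (intro mult_mono power_mono) auto
    finally show ?thesis by simp
  qed
  hence "exp (- (t * x)) * ((bernoulli_gf t ^ Suc n - 1) / t) \<le> exp (- (t * x)) * (real (Suc n) * (1 + t) ^ Suc n)"
    by (intro mult_left_mono) auto
  finally show ?thesis by (simp add: mult_ac)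
qed

lemma abs_inv_integrand_le:
  assumes t: "t > 0" and "y \<ge> c"
  shows "\<bar>inv_integrand n y t\<bar> \<le> (1 + t) ^ n * exp (- (c * t))"
proof -
  have "\<bar>inv_integrand n y t\<bar> = exp (- (t * y)) * bernoulli_gf t ^ n"
    unfolding inv_integrand_def using bernoulli_gf_ge_1[OF t] by simp
  also have "\<dots> \<le> exp (- (c * t)) * (1 + t) ^ n"
    using assms bernoulli_gf_ge_1[OF t] bernoulli_gf_le[OF t] by (intro mult_mono power_mono) (auto simp: mult.commute mult_left_mono)
  finally show ?thesis by (simp add: mult.commute)
qed

lemma set_integrable_log_integrand:
  assumes x: "x > 0"
  shows "set_integrable lborel {0<..} (log_integrand n x)"
proof -
  have m: "min 1 x > 0" using x by simp
  have I1: "set_integrable lborel {0<..} (\<lambda>t. exp (- (min 1 x * t)) * \<bar>x - 1\<bar>)"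
    using integrable_mult_left[OF integral_exp_neg_Ioi(1)[OF m, unfolded set_integrable_def], of "\<bar>x - 1\<bar>"]
    unfolding set_integrable_def by (simp add: mult_ac)
  have I2: "set_integrable lborel {0<..} (\<lambda>t. real (Suc n) * ((1 + t) ^ Suc n * exp (- (x * t))))"
    using integrable_mult_left[OF set_integrable_poly_exp_neg[OF x, of "Suc n", unfolded set_integrable_def], of "real (Suc n)"]
    unfolding set_integrable_def by (simp add: mult_ac)
  have "set_integrable lborel {0<..} (\<lambda>t. exp (- (min 1 x * t)) * \<bar>x - 1\<bar> + real (Suc n) * ((1 + t) ^ Suc n * exp (- (x * t))))"
    using set_integral_add(1)[OF I1 I2] .
  thus ?thesis
  proof (rule set_integrable_bound)
    show "set_borel_measurable lborel {0<..} (log_integrand n x)"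
      unfolding set_borel_measurable_def log_integrand_def bernoulli_gf_def by measurable
    show "AE t in lborel. t \<in> {0<..} \<longrightarrow> norm (log_integrand n x t) \<le> norm (exp (- (min 1 x * t)) * \<bar>x - 1\<bar> + real (Suc n) * ((1 + t) ^ Suc n * exp (- (x * t))))"
      using abs_log_integrand_le[OF _ x] by (intro AE_I2) (auto intro: order.trans[OF _ abs_ge_self])
  qed
qed

lemma set_integrable_inv_integrand:
  assumes y: "y > 0"
  shows "set_integrable lborel {0<..} (inv_integrand n y)"
  using set_integrable_poly_exp_neg[OF y, of n]
proof (rule set_integrable_bound)
  show "set_borel_measurable lborel {0<..} (inv_integrand n y)"
    unfolding set_borel_measurable_def inv_integrand_def bernoulli_gf_def by measurable
  show "AE t in lborel. t \<in> {0<..} \<longrightarrow> norm (inv_integrand n y t) \<le> norm ((1 + t) ^ n * exp (- (y * t)))"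
    using abs_inv_integrand_le[of _ y y n] by (intro AE_I2) auto
qed

lemma has_real_derivative_log_integral:
  assumes y: "y > 0"
  shows "(log_integral n has_real_derivative inv_integral (Suc n) y) (at y)"
proof -
  define r where "r = y / 2"
  have r: "r > 0" using y by (simp add: r_def)
  have ballr: "z > r" if "z \<in> ball y r" for z
    using that by (auto simp: dist_real_def r_def abs_if split: if_splits)
  have "((\<lambda>z. \<integral>t. indicator {0<..} t *\<^sub>R log_integrand n z t \<partial>lborel) has_field_derivative
          (\<integral>t. indicator {0<..} t *\<^sub>R inv_integrand (Suc n) y t \<partial>lborel)) (at y)"
  proof (rule has_field_derivative_integral_param[OF r, where g = "\<lambda>t. indicator {0<..} t *\<^sub>R ((1 + t) ^ Suc n * exp (- (r * t)))"])
    fix z assume z: "z \<in> ball y r"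
    show "integrable lborel (\<lambda>t. indicator {0<..} t *\<^sub>R log_integrand n z t)"
      using set_integrable_log_integrand[of z n] ballr[OF z] r unfolding set_integrable_def by auto
    fix t :: real
    show "((\<lambda>z. indicator {0<..} t *\<^sub>R log_integrand n z t) has_field_derivative indicator {0<..} t *\<^sub>R inv_integrand (Suc n) z t) (at z)"
    proof (cases "t > 0")
      case True
      have "((\<lambda>z. log_integrand n z t) has_field_derivative inv_integrand (Suc n) z t) (at z)"
        unfolding log_integrand_def inv_integrand_def using True by (auto intro!: derivative_eq_intros simp: field_simps)
      thus ?thesis using True by simp
    qed simp
    show "norm (indicator {0<..} t *\<^sub>R inv_integrand (Suc n) z t) \<le> indicator {0<..} t *\<^sub>R ((1 + t) ^ Suc n * exp (- (r * t)))"
    proof (cases "t > 0")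
      case True
      show ?thesis using abs_inv_integrand_le[OF True, of r z "Suc n"] ballr[OF z] True
        by (simp add: indicator_def del: power_Suc)
    qed simp
  next
    show "integrable lborel (\<lambda>t. indicator {0<..} t *\<^sub>R ((1 + t) ^ Suc n * exp (- (r * t))))"
      using set_integrable_poly_exp_neg[OF r] unfolding set_integrable_def .
    show "(\<lambda>t. indicator {0<..} t *\<^sub>R inv_integrand (Suc n) y t) \<in> borel_measurable lborel"
      unfolding inv_integrand_def bernoulli_gf_def by measurable
  qed
  thus ?thesis unfolding log_integral_def[abs_def] inv_integral_def set_lebesgue_integral_def by simp
qed

lemma inv_integrand_tendsto_0: "(inv_integrand m y \<longlongrightarrow> 1) (at_right 0)"
proof -
  have "((\<lambda>t. exp (- (t * y)) * bernoulli_gf t ^ m) \<longlongrightarrow> exp (- (0 * y)) * 1 ^ m) (at_right 0)"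
    by (intro tendsto_intros bernoulli_gf_tendsto_0)
  thus ?thesis unfolding inv_integrand_def[abs_def] by simp
qed

lemma inv_integrand_tendsto_at_top:
  assumes y: "y > 0"
  shows "(inv_integrand m y \<longlongrightarrow> 0) at_top"
proof (rule Lim_null_comparison)
  show "((\<lambda>t. (1 + t) ^ m * exp (- (y * t))) \<longlongrightarrow> 0) at_top"
    using y by real_asymp
  show "\<forall>\<^sub>F t in at_top. norm (inv_integrand m y t) \<le> (1 + t) ^ m * exp (- (y * t))"
    using eventually_gt_at_top[of 0] by eventually_elim (use abs_inv_integrand_le in auto)
qed

lemma has_real_derivative_inv_integrand:
  assumes t: "t > 0"
  shows "(inv_integrand (Suc m) y has_real_derivative
           real (Suc m) * ((inv_integrand (Suc m) y t - inv_integrand (Suc (Suc m)) (y + 1) t) / t)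
           - y * inv_integrand (Suc m) y t) (at t)"
proof -
  define N where "N = real (Suc m)"
  have dY: "((\<lambda>t. exp (- (t * y))) has_real_derivative - y * exp (- (t * y))) (at t)"
    by (auto intro!: derivative_eq_intros)
  have dQ: "((\<lambda>t. bernoulli_gf t ^ Suc m) has_real_derivative
      N * bernoulli_gf t ^ m * ((bernoulli_gf t - exp (- t) * bernoulli_gf t ^ 2) / t)) (at t)"
    using DERIV_power[OF bernoulli_gf_deriv[OF t], of "Suc m"] by (simp add: N_def mult_ac)
  have "(inv_integrand (Suc m) y has_real_derivative
      - y * exp (- (t * y)) * bernoulli_gf t ^ Suc m
      + (N * bernoulli_gf t ^ m * ((bernoulli_gf t - exp (- t) * bernoulli_gf t ^ 2) / t)) * exp (- (t * y))) (at t)"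
    unfolding inv_integrand_def[abs_def] by (rule DERIV_mult[OF dY dQ])
  moreover have "- y * exp (- (t * y)) * bernoulli_gf t ^ Suc m
      + (N * bernoulli_gf t ^ m * ((bernoulli_gf t - exp (- t) * bernoulli_gf t ^ 2) / t)) * exp (- (t * y))
    = N * ((inv_integrand (Suc m) y t - inv_integrand (Suc (Suc m)) (y + 1) t) / t) - y * inv_integrand (Suc m) y t"
  proof -
    have alg: "- y * Y * Q ^ Suc m + (N * Q ^ m * ((Q - E * Q ^ 2) / t)) * Y
        = N * ((Y * Q ^ Suc m - (Y * E) * Q ^ Suc (Suc m)) / t) - y * (Y * Q ^ Suc m)" for Y Q E :: real
      using t by (simp add: field_simps power2_eq_square)
    have "exp (- (t * (y + 1))) = exp (- (t * y)) * exp (- t)"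
      by (simp add: algebra_simps exp_add[symmetric])
    thus ?thesis
      using alg[of "exp (- (t * y))" "bernoulli_gf t" "exp (- t)"] unfolding inv_integrand_def by simp
  qed
  ultimately show ?thesis unfolding N_def by (rule DERIV_cong)
qed

lemma inv_integrand_diff_eq_log_integrand_diff:
  "(inv_integrand (Suc m) y t - inv_integrand (Suc (Suc m)) (y + 1) t) / t
     = log_integrand (Suc m) (y + 1) t - log_integrand m y t"
  unfolding log_integrand_def inv_integrand_def by (simp add: diff_divide_distrib)

lemma set_integrable_inv_integrand_diff:
  assumes y: "y > 0"
  shows "set_integrable lborel {0<..}
           (\<lambda>t. (inv_integrand (Suc m) y t - inv_integrand (Suc (Suc m)) (y + 1) t) / t)"
  unfolding inv_integrand_diff_eq_log_integrand_diff
  using set_integrable_log_integrand[of "y + 1" "Suc m"] set_integrable_log_integrand[of y m] y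
  by (intro set_integral_diff(1)) auto

lemma integral_inv_integrand_by_parts:
  assumes y: "y > 0"
  shows "(LBINT t:{0<..}. (inv_integrand (Suc m) y t - inv_integrand (Suc (Suc m)) (y + 1) t) / t)
           = - 1 / real (Suc m) + (y / real (Suc m)) * inv_integral (Suc m) y"
proof -
  define N where "N = real (Suc m)"
  define D where "D t = (inv_integrand (Suc m) y t - inv_integrand (Suc (Suc m)) (y + 1) t) / t" for t
  define f where "f t = N * D t - y * inv_integrand (Suc m) y t" for t
  have ID: "set_integrable lborel {0<..} D"
    unfolding D_def by (rule set_integrable_inv_integrand_diff[OF y])
  have IK: "set_integrable lborel {0<..} (\<lambda>t. y * inv_integrand (Suc m) y t)"
    using set_integrable_inv_integrand[OF y, of "Suc m"] unfolding set_integrable_def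
    by (simp add: integrable_mult_left mult_ac)
  have IND: "set_integrable lborel {0<..} (\<lambda>t. N * D t)"
    using ID unfolding set_integrable_def by (simp add: integrable_mult_left mult_ac)
  have "(LBINT t=0..\<infinity>. f t) = 0 - 1"
  proof (rule interval_integral_FTC_integrable[where F = "inv_integrand (Suc m) y"])
    show "((inv_integrand (Suc m) y \<circ> real_of_ereal) \<longlongrightarrow> 1) (at_right 0)"
      unfolding zero_ereal_def ereal_tendsto_simps by (rule inv_integrand_tendsto_0)
    show "((inv_integrand (Suc m) y \<circ> real_of_ereal) \<longlongrightarrow> 0) (at_left \<infinity>)"
      unfolding ereal_tendsto_simps by (rule inv_integrand_tendsto_at_top[OF y])
    have "einterval 0 \<infinity> = {0<..}" by (auto simp: einterval_def zero_ereal_def)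
    thus "set_integrable lborel (einterval 0 \<infinity>) f"
      unfolding f_def using set_integral_diff(1)[OF IND IK] by simp
    fix x assume "0 < ereal x" "ereal x < \<infinity>"
    hence x: "x > 0" by simp
    show "(inv_integrand (Suc m) y has_vector_derivative f x) (at x)"
      using has_real_derivative_inv_integrand[OF x, of m y]
      by (simp add: has_real_derivative_iff_has_vector_derivative f_def D_def N_def)
    show "isCont f x"
      unfolding f_def D_def inv_integrand_def using x by (auto intro!: continuous_intros isCont_bernoulli_gf)
  qed simp
  moreover have "(LBINT t=0..\<infinity>. f t) = N * (LBINT t:{0<..}. D t) - y * inv_integral (Suc m) y"
    unfolding f_def interval_lebesgue_integral_0_infty inv_integral_def
    by (simp add: set_integral_diff(2)[OF IND IK] set_integral_mult_right)
  ultimately have "N * (LBINT t:{0<..}. D t) = y * inv_integral (Suc m) y - 1" by simp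
  hence "(LBINT t:{0<..}. D t) = (y * inv_integral (Suc m) y - 1) / N"
    by (simp add: N_def eq_divide_eq mult.commute)
  thus ?thesis unfolding N_def D_def by (simp add: diff_divide_distrib)
qed

lemma log_integral_Suc_shift:
  assumes y: "y > 0"
  shows "log_integral (Suc m) (y + 1) = log_integral m y - 1 / real (Suc m) + (y / real (Suc m)) * inv_integral (Suc m) y"
proof -
  have "log_integral (Suc m) (y + 1) - log_integral m y = (LBINT t:{0<..}. log_integrand (Suc m) (y + 1) t - log_integrand m y t)"
    unfolding log_integral_def using set_integrable_log_integrand[of "y+1" "Suc m"] set_integrable_log_integrand[of y m] y
    by (intro set_integral_diff(2)[symmetric]) auto
  also have "\<dots> = - 1 / real (Suc m) + (y / real (Suc m)) * inv_integral (Suc m) y"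
    unfolding inv_integrand_diff_eq_log_integrand_diff[symmetric] by (rule integral_inv_integrand_by_parts[OF y])
  finally show ?thesis by simp
qed

lemma log_integrand_Suc_diff:
  assumes t: "t > 0"
  shows "log_integrand (Suc m) x t - log_integrand m x t
           = (inv_integrand (Suc m) x t - inv_integrand (Suc (Suc m)) (x + 1) t) / t - inv_integrand (Suc m) x t"
proof -
  have e: "exp (- (t * (x + 1))) = exp (- (t * x)) * exp (- t)"
    by (simp add: algebra_simps exp_add[symmetric])
  have "(Y - Y * Q) * Q ^ Suc m / t = (Y * Q ^ Suc m - Y * E * (Q * Q ^ Suc m)) / t - Y * Q ^ Suc m"
    if "Q * (1 - E) = t" for Y Q E :: real
  proof -
    have "(Y * Q ^ Suc m - Y * E * (Q * Q ^ Suc m)) / t - Y * Q ^ Suc m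
        = (Y * Q ^ Suc m - Y * E * (Q * Q ^ Suc m) - t * (Y * Q ^ Suc m)) / t"
      using t by (simp add: field_simps)
    also have "t * (Y * Q ^ Suc m) = (Q * (1 - E)) * (Y * Q ^ Suc m)" using that by simp
    also have "Y * Q ^ Suc m - Y * E * (Q * Q ^ Suc m) - (Q * (1 - E)) * (Y * Q ^ Suc m) = (Y - Y * Q) * Q ^ Suc m"
      by (simp add: algebra_simps)
    finally show ?thesis by simp
  qed
  from this[OF bernoulli_gf_mult[OF t], of "exp (- (t * x))"] show ?thesis
    unfolding log_integrand_def inv_integrand_def e using t by (simp add: field_simps)
qed

lemma log_integral_Suc:
  assumes x: "x > 0"
  shows "log_integral (Suc m) x = log_integral m x - 1 / real (Suc m) + ((x - real (Suc m)) / real (Suc m)) * inv_integral (Suc m) x"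
proof -
  have "log_integral (Suc m) x - log_integral m x = (LBINT t:{0<..}. log_integrand (Suc m) x t - log_integrand m x t)"
    unfolding log_integral_def using set_integrable_log_integrand[of x "Suc m"] set_integrable_log_integrand[of x m] x
    by (intro set_integral_diff(2)[symmetric]) auto
  also have "\<dots> = (LBINT t:{0<..}. (inv_integrand (Suc m) x t - inv_integrand (Suc (Suc m)) (x + 1) t) / t - inv_integrand (Suc m) x t)"
    by (intro set_lebesgue_integral_cong) (auto simp: log_integrand_Suc_diff)
  also have "\<dots> = (LBINT t:{0<..}. (inv_integrand (Suc m) x t - inv_integrand (Suc (Suc m)) (x + 1) t) / t) - inv_integral (Suc m) x"
    unfolding inv_integral_def
    by (rule set_integral_diff(2)[OF set_integrable_inv_integrand_diff[OF x] set_integrable_inv_integrand[OF x]])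
  also have "\<dots> = - 1 / real (Suc m) + (x / real (Suc m)) * inv_integral (Suc m) x - inv_integral (Suc m) x"
    by (simp only: integral_inv_integrand_by_parts[OF x])
  finally show ?thesis by (simp add: diff_divide_distrib algebra_simps)
qed

lemma half_div_sinh_eq:
  assumes t: "t > 0"
  shows "(t / 2) / sinh (t / 2) = exp (- (t / 2)) * bernoulli_gf t"
proof -
  define E where "E = exp (- (t / 2))"
  have E: "0 < E" "E < 1" using t by (auto simp: E_def)
  have "exp (t / 2) * E = 1" by (simp add: E_def flip: exp_add)
  hence "exp (t / 2) = 1 / E" using E by (simp add: field_simps)
  hence sinh: "sinh (t / 2) = (1 / E - E) / 2" unfolding sinh_def E_def by simp
  have "E * E < 1 * 1" using E by (intro mult_strict_mono) auto
  hence "(t / 2) / sinh (t / 2) = E * (t / (1 - E * E))"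
    unfolding sinh using E by (simp add: field_simps)
  also have "E * E = exp (- t)" by (simp add: E_def flip: exp_add)
  finally show ?thesis unfolding bernoulli_gf_def E_def .
qed

lemma log_integrand_eq_sinh:
  assumes t: "t > 0"
  shows "(exp (- t) - exp (- (t * a)) * ((t / 2) / sinh (t / 2)) ^ Suc n) / t
         = log_integrand n (a + real (Suc n) / 2) t"
proof -
  have "exp (- (t * a)) * exp (- (t / 2)) ^ Suc n = exp (- (t * (a + real (Suc n) / 2)))"
    by (simp add: exp_of_nat_mult[symmetric] exp_add[symmetric] algebra_simps)
  thus ?thesis
    unfolding log_integrand_def half_div_sinh_eq[OF t] power_mult_distrib by (simp add: mult.assoc)
qed

section \<open>Binet's integral for the digamma function\<close>

lemma sum_exp_neg_geometric:
  fixes t x :: real assumes t: "t > 0"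
  shows "(\<Sum>k<m. exp (- ((x + real k) * t))) = exp (- (t * x)) * bernoulli_gf t * (1 - exp (- (t * real m))) / t"
proof -
  have ne: "exp (- t) \<noteq> 1" using t by simp
  have "(\<Sum>k<m. exp (- ((x + real k) * t))) = (\<Sum>k<m. exp (- (t * x)) * exp (- t) ^ k)"
    by (intro sum.cong refl) (simp add: exp_of_nat_mult[symmetric] exp_add[symmetric] algebra_simps)
  also have "\<dots> = exp (- (t * x)) * ((1 - exp (- t) ^ m) / (1 - exp (- t)))"
    using t by (simp add: sum_distrib_left[symmetric] sum_gp_strict ne)
  finally have 1: "(\<Sum>k<m. exp (- ((x + real k) * t))) = exp (- (t * x)) * ((1 - exp (- t) ^ m) / (1 - exp (- t)))" .
  have 2: "exp (- t) ^ m = exp (- (t * real m))"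
    by (simp add: exp_of_nat_mult[symmetric] mult.commute)
  have 3: "exp (- (t * x)) * ((1 - exp (- (t * real m))) / (1 - exp (- t)))
               = exp (- (t * x)) * bernoulli_gf t * (1 - exp (- (t * real m))) / t"
    unfolding bernoulli_gf_def using t one_minus_exp_neg_pos[OF t] by (simp add: field_simps)
  show ?thesis using 1 2 3 by simp
qed

definition digamma_tail :: "real \<Rightarrow> nat \<Rightarrow> real \<Rightarrow> real" where
  "digamma_tail x m t = exp (- (t * real m)) * ((1 - exp (- (t * x)) * bernoulli_gf t) / t)"

lemma abs_digamma_tail_le:
  assumes t: "t > 0" and x: "x > 0"
  shows "\<bar>digamma_tail x m t\<bar> \<le> (x + 1) * exp (- (real m * t))"
proof -
  have eq: "(1 - exp (- (t * x)) * bernoulli_gf t) / t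
      = (1 - exp (- (t * x))) / t + exp (- (t * x)) * ((1 - bernoulli_gf t) / t)"
    using t by (simp add: field_simps)
  have a1: "0 \<le> (1 - exp (- (t * x))) / t" using t x by auto
  have "1 - exp (- (t * x)) \<le> x * t"
    using exp_ge_add_one_self[of "- (t * x)"] by (simp add: mult.commute)
  hence a2: "(1 - exp (- (t * x))) / t \<le> x" using t by (simp add: divide_le_eq)
  have "\<bar>(1 - bernoulli_gf t) / t\<bar> \<le> 1"
    using bernoulli_gf_minus_1_le[OF t] bernoulli_gf_ge_1[OF t] t by (simp add: abs_divide)
  hence "exp (- (t * x)) * \<bar>(1 - bernoulli_gf t) / t\<bar> \<le> 1 * 1"
    using t x by (intro mult_mono) auto
  hence b: "\<bar>exp (- (t * x)) * ((1 - bernoulli_gf t) / t)\<bar> \<le> 1"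
    by (simp add: abs_mult)
  have "\<bar>(1 - exp (- (t * x)) * bernoulli_gf t) / t\<bar> \<le> x + 1"
    unfolding eq using a1 a2 b by linarith
  hence "exp (- (t * real m)) * \<bar>(1 - exp (- (t * x)) * bernoulli_gf t) / t\<bar> \<le> exp (- (t * real m)) * (x + 1)"
    by (intro mult_left_mono) auto
  thus ?thesis unfolding digamma_tail_def by (simp add: abs_mult mult_ac)
qed

lemma
  assumes x: "x > 0" and m: "m > 0"
  shows set_integrable_digamma_tail: "set_integrable lborel {0<..} (digamma_tail x m)"
    and abs_integral_digamma_tail_le: "\<bar>LBINT t:{0<..}. digamma_tail x m t\<bar> \<le> (x + 1) / real m"
proof -
  have mpos: "real m > 0" using m by simp
  have Ig: "set_integrable lborel {0<..} (\<lambda>t. (x + 1) * exp (- (real m * t)))"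
    using integrable_mult_left[OF integral_exp_neg_Ioi(1)[OF mpos, unfolded set_integrable_def], of "x+1"]
    unfolding set_integrable_def by (simp add: mult_ac)
  have bound: "norm (digamma_tail x m t) \<le> (x + 1) * exp (- (real m * t))" if "t \<in> {0<..}" for t
    using abs_digamma_tail_le[of t x m] that x by simp
  show I: "set_integrable lborel {0<..} (digamma_tail x m)"
  proof (rule set_integrable_bound[OF Ig])
    show "set_borel_measurable lborel {0<..} (digamma_tail x m)"
      unfolding set_borel_measurable_def digamma_tail_def bernoulli_gf_def by measurable
    show "AE t in lborel. t \<in> {0<..} \<longrightarrow> norm (digamma_tail x m t) \<le> norm ((x + 1) * exp (- (real m * t)))"
      using bound x by (intro AE_I2) (auto intro: order.trans[OF _ abs_ge_self])
  qed
  have "\<bar>LBINT t:{0<..}. digamma_tail x m t\<bar> \<le> (LBINT t:{0<..}. norm (digamma_tail x m t))"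
    using set_integral_norm_bound[OF I] by simp
  also have "\<dots> \<le> (LBINT t:{0<..}. (x + 1) * exp (- (real m * t)))"
    using set_integrable_norm[OF I] Ig bound by (rule set_integral_mono)
  also have "\<dots> = (x + 1) / real m"
    using integral_exp_neg_Ioi(2)[OF mpos] by (simp add: set_integral_mult_right)
  finally show "\<bar>LBINT t:{0<..}. digamma_tail x m t\<bar> \<le> (x + 1) / real m" .
qed

lemma ln_minus_sum_inverse_eq_log_integral:
  assumes x: "x > 0" and m: "m > 0"
  shows "ln (real m) - (\<Sum>k<m. inverse (x + real k))
           = log_integral 0 x - (LBINT t:{0<..}. digamma_tail x m t)"
proof -
  have mpos: "real m > 0" using m by simp
  have xk: "x + real k > 0" for k using x by simp
  have Isum: "set_integrable lborel {0<..} (\<lambda>t. \<Sum>k<m. exp (- ((x + real k) * t)))"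
    using integral_exp_neg_Ioi(1)[OF xk] unfolding set_integrable_def scaleR_sum_right
    by (intro Bochner_Integration.integrable_sum) auto
  have geometric: "(\<Sum>k<m. exp (- ((x + real k) * t)))
      = exp (- (t * x)) * bernoulli_gf t * (1 - exp (- (t * real m))) / t" if "t \<in> {0<..}" for t
    using sum_exp_neg_geometric[of t x m] that by simp
  have IS: "set_integrable lborel {0<..} (\<lambda>t. exp (- (t * x)) * bernoulli_gf t * (1 - exp (- (t * real m))) / t)"
    using Isum by (rule set_integrable_cong[THEN iffD1, rotated -1]) (auto simp: geometric)
  have "(\<Sum>k<m. inverse (x + real k)) = (\<Sum>k<m. LBINT t:{0<..}. exp (- ((x + real k) * t)))"
    using integral_exp_neg_Ioi(2)[OF xk] by (simp add: inverse_eq_divide)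
  also have "\<dots> = (LBINT t:{0<..}. (\<Sum>k<m. exp (- ((x + real k) * t))))"
    unfolding set_lebesgue_integral_def scaleR_sum_right using integral_exp_neg_Ioi(1)[OF xk]
    unfolding set_integrable_def by (intro Bochner_Integration.integral_sum[symmetric]) auto
  also have "\<dots> = (LBINT t:{0<..}. exp (- (t * x)) * bernoulli_gf t * (1 - exp (- (t * real m))) / t)"
    by (intro set_lebesgue_integral_cong) (auto simp: geometric)
  finally have S: "(\<Sum>k<m. inverse (x + real k))
      = (LBINT t:{0<..}. exp (- (t * x)) * bernoulli_gf t * (1 - exp (- (t * real m))) / t)" .
  have "ln (real m) - (\<Sum>k<m. inverse (x + real k))
      = (LBINT t:{0<..}. (exp (- t) - exp (- (t * real m))) / t
                         - exp (- (t * x)) * bernoulli_gf t * (1 - exp (- (t * real m))) / t)"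
    unfolding S integral_frullani_eq_ln(2)[OF mpos, symmetric]
    by (rule set_integral_diff(2)[symmetric, OF integral_frullani_eq_ln(1)[OF mpos] IS])
  also have "\<dots> = (LBINT t:{0<..}. log_integrand 0 x t - digamma_tail x m t)"
    by (intro set_lebesgue_integral_cong)
       (auto simp: log_integrand_def digamma_tail_def diff_divide_distrib algebra_simps)
  also have "\<dots> = log_integral 0 x - (LBINT t:{0<..}. digamma_tail x m t)"
    unfolding log_integral_def
    by (rule set_integral_diff(2)[OF set_integrable_log_integrand[OF x] set_integrable_digamma_tail[OF x m]])
  finally show ?thesis .
qed

lemma log_integral_0_eq_Digamma:
  assumes x: "x > 0"
  shows "log_integral 0 x = Digamma x"
proof -
  have "(\<lambda>m. (ln (real m) - (\<Sum>k<m. inverse (x + real k))) - log_integral 0 x) \<longlonglongrightarrow> 0"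
  proof (rule Lim_null_comparison)
    show "\<forall>\<^sub>F m in sequentially.
        norm (ln (real m) - (\<Sum>k<m. inverse (x + real k)) - log_integral 0 x) \<le> (x + 1) * (1 / real m)"
      using eventually_gt_at_top[of "0::nat"]
      by eventually_elim
         (use ln_minus_sum_inverse_eq_log_integral[OF x] abs_integral_digamma_tail_le[OF x] in simp)
    show "(\<lambda>m. (x + 1) * (1 / real m)) \<longlonglongrightarrow> 0"
      using tendsto_mult_right_zero[OF lim_inverse_n', of "x+1"] by simp
  qed
  hence "(\<lambda>m. ln (real m) - (\<Sum>k<m. inverse (x + real k))) \<longlonglongrightarrow> log_integral 0 x"
    by (rule LIM_zero_cancel)
  moreover have "(\<lambda>m. ln (real m) - (\<Sum>k<m. inverse (x + real k))) \<longlonglongrightarrow> Digamma x"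
    using Digamma_LIMSEQ[of x] x by simp
  ultimately show ?thesis by (rule LIMSEQ_unique)
qed

section \<open>Higher derivatives of the closed form\<close>

text \<open>\<open>(deriv ^^ k) f\<close> uses the total function \<open>deriv\<close>, so derivative rules only hold where
  every iterate is genuinely differentiable; \<open>smooth_on U f\<close> records this on an open set.\<close>

definition smooth_on :: "real set \<Rightarrow> (real \<Rightarrow> real) \<Rightarrow> bool" where
  "smooth_on U f \<longleftrightarrow> (\<forall>k. \<forall>u\<in>U. ((deriv ^^ k) f has_real_derivative (deriv ^^ Suc k) f u) (at u))"

lemma smooth_onD: "smooth_on U f \<Longrightarrow> u \<in> U \<Longrightarrow> ((deriv ^^ k) f has_real_derivative (deriv ^^ Suc k) f u) (at u)"
  unfolding smooth_on_def by blast

lemma smooth_on_local: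
  assumes U: "open U" and g: "smooth_on U g"
    and eq: "\<And>k u. u \<in> U \<Longrightarrow> (deriv ^^ k) f u = F k u"
    and F: "\<And>k u. u \<in> U \<Longrightarrow> (F k has_real_derivative F (Suc k) u) (at u)"
  shows "smooth_on U f"
  unfolding smooth_on_def
proof (intro allI ballI)
  fix k u assume u: "u \<in> U"
  have ev: "eventually (\<lambda>v. (deriv ^^ k) f v = F k v) (nhds u)"
    using eventually_nhds_in_open[OF U u] by eventually_elim (rule eq)
  have "((deriv ^^ k) f has_real_derivative F (Suc k) u) (at u)"
    using F[OF u] DERIV_cong_ev[OF refl ev refl] by simp
  thus "((deriv ^^ k) f has_real_derivative (deriv ^^ Suc k) f u) (at u)"
    using eq[OF u, of "Suc k"] by simp
qed

lemma deriv_local_eq: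
  assumes U: "open U" and u: "u \<in> U" and eq: "\<And>v. v \<in> U \<Longrightarrow> f v = g v"
  shows "deriv f u = deriv g u"
proof -
  have "eventually (\<lambda>v. v \<in> U) (nhds u)" by (rule eventually_nhds_in_open[OF U u])
  hence "eventually (\<lambda>v. f v = g v) (nhds u)" by (rule eventually_mono) (rule eq)
  thus ?thesis by (rule deriv_cong_ev) simp
qed

lemma has_real_derivative_higher_deriv_linear_mult:
  assumes g: "smooth_on U g" and u: "u \<in> U"
  shows "((\<lambda>v. (v + c) * (deriv ^^ k) g v + real k * (deriv ^^ (k - 1)) g v) has_real_derivative
          (u + c) * (deriv ^^ Suc k) g u + real (Suc k) * (deriv ^^ (Suc k - 1)) g u) (at u)"
proof -
  have d1: "((deriv ^^ k) g has_real_derivative (deriv ^^ Suc k) g u) (at u)"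
    by (rule smooth_onD[OF g u])
  have d2: "((deriv ^^ (k - 1)) g has_real_derivative (deriv ^^ Suc (k - 1)) g u) (at u)"
    by (rule smooth_onD[OF g u])
  have "((\<lambda>v. (v + c) * (deriv ^^ k) g v + real k * (deriv ^^ (k - 1)) g v) has_real_derivative
          (1 * (deriv ^^ k) g u + (deriv ^^ Suc k) g u * (u + c)) + real k * (deriv ^^ Suc (k - 1)) g u) (at u)"
    by (intro DERIV_add DERIV_mult DERIV_cmult d1 d2 derivative_eq_intros) auto
  thus ?thesis
    by (rule DERIV_cong) (cases k; simp add: algebra_simps)
qed

lemma higher_deriv_linear_mult:
  assumes U: "open U" and g: "smooth_on U g"
  shows "u \<in> U \<Longrightarrow> (deriv ^^ k) (\<lambda>v. (v + c) * g v) u = (u + c) * (deriv ^^ k) g u + real k * (deriv ^^ (k - 1)) g u"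
proof (induction k arbitrary: u)
  case 0 thus ?case by simp
next
  case (Suc k)
  have "(deriv ^^ Suc k) (\<lambda>v. (v + c) * g v) u = deriv ((deriv ^^ k) (\<lambda>v. (v + c) * g v)) u" by simp
  also have "\<dots> = deriv (\<lambda>v. (v + c) * (deriv ^^ k) g v + real k * (deriv ^^ (k - 1)) g v) u"
    by (rule deriv_local_eq[OF U Suc.prems]) (rule Suc.IH)
  also have "\<dots> = (u + c) * (deriv ^^ Suc k) g u + real (Suc k) * (deriv ^^ k) g u"
    using has_real_derivative_higher_deriv_linear_mult[OF g Suc.prems, of c k]
    unfolding diff_Suc_1 by (rule DERIV_imp_deriv)
  finally show ?case by simp
qed

lemma smooth_linear_mult:
  assumes U: "open U" and g: "smooth_on U g"
  shows "smooth_on U (\<lambda>v. (v + c) * g v)"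
  by (rule smooth_on_local[OF U g higher_deriv_linear_mult[OF U g]])
     (assumption | rule has_real_derivative_higher_deriv_linear_mult[OF g])+

lemma higher_deriv_cmult:
  assumes U: "open U" and g: "smooth_on U g"
  shows "u \<in> U \<Longrightarrow> (deriv ^^ k) (\<lambda>v. a * g v) u = a * (deriv ^^ k) g u"
proof (induction k arbitrary: u)
  case 0 thus ?case by simp
next
  case (Suc k)
  have "(deriv ^^ Suc k) (\<lambda>v. a * g v) u = deriv ((deriv ^^ k) (\<lambda>v. a * g v)) u" by simp
  also have "\<dots> = deriv (\<lambda>v. a * (deriv ^^ k) g v) u"
    by (rule deriv_local_eq[OF U Suc.prems]) (rule Suc.IH)
  also have "\<dots> = a * (deriv ^^ Suc k) g u"
    by (rule DERIV_imp_deriv) (intro DERIV_cmult smooth_onD[OF g Suc.prems])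
  finally show ?case .
qed

lemma smooth_cmult:
  assumes U: "open U" and g: "smooth_on U g"
  shows "smooth_on U (\<lambda>v. a * g v)"
proof (rule smooth_on_local[OF U g higher_deriv_cmult[OF U g]])
  fix k u assume "u \<in> U"
  thus "((\<lambda>u. a * (deriv ^^ k) g u) has_real_derivative a * (deriv ^^ Suc k) g u) (at u)"
    by (intro DERIV_cmult smooth_onD[OF g])
qed

lemma deriv_shift_fun: "deriv (\<lambda>x. f (x + d)) x = deriv f (x + d)"
  unfolding deriv_def by (simp add: DERIV_shift)

lemma higher_deriv_shift: "(deriv ^^ k) (\<lambda>x. f (x + d)) = (\<lambda>x. (deriv ^^ k) f (x + d))"
proof (induction k)
  case (Suc k)
  show ?case by (simp add: Suc deriv_shift_fun)
qed simp

lemma smooth_shift: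
  assumes g: "smooth_on U g"
  shows "smooth_on {x. x + d \<in> U} (\<lambda>x. g (x + d))"
  unfolding smooth_on_def higher_deriv_shift
proof (intro allI ballI)
  fix k x assume "x \<in> {x. x + d \<in> U}"
  hence "x + d \<in> U" by simp
  from smooth_onD[OF g this, of k] show "((\<lambda>x. (deriv ^^ k) g (x + d)) has_real_derivative (deriv ^^ Suc k) g (x + d)) (at x)"
    by (simp add: DERIV_shift)
qed

lemma smooth_Digamma: "smooth_on {v. v > 0} (Digamma :: real \<Rightarrow> real)"
  unfolding smooth_on_def
proof (intro allI ballI)
  fix k and u :: real assume "u \<in> {v. v > 0}"
  hence u: "u > 0" by simp
  have nz: "v \<notin> \<int>\<^sub>\<le>\<^sub>0" if "v > 0" for v :: real using that by (auto elim!: nonpos_Ints_cases)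
  have "eventually (\<lambda>v. v \<in> {v::real. v > 0}) (nhds u)"
    by (rule eventually_nhds_in_open) (auto simp: open_Collect_less u)
  hence ev: "eventually (\<lambda>v. (deriv ^^ k) Digamma v = Polygamma k v) (nhds u)"
    by (rule eventually_mono) (use higher_deriv_Polygamma[OF nz, of _ k 0] in simp)
  have "(Polygamma k has_real_derivative Polygamma (Suc k) u) (at u)"
    by (rule has_field_derivative_Polygamma[OF nz[OF u]])
  hence "((deriv ^^ k) Digamma has_real_derivative Polygamma (Suc k) u) (at u)"
    using DERIV_cong_ev[OF refl ev refl] by simp
  thus "((deriv ^^ k) Digamma has_real_derivative (deriv ^^ Suc k) Digamma u) (at u)"
    using higher_deriv_Polygamma[OF nz[OF u], of "Suc k" 0] by simp
qed

definition binom_Digamma :: "nat \<Rightarrow> real \<Rightarrow> real \<Rightarrow> real" where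
  "binom_Digamma n c u = ((u - 1) gchoose n) * Digamma (u - c)"

lemma binom_Digamma_Suc:
  "binom_Digamma (Suc j) c u = (u - real (Suc j)) * binom_Digamma j c u / real (Suc j)"
proof -
  have "(u - 1) * ((u - 1) gchoose j) = real j * ((u - 1) gchoose j) + real (Suc j) * ((u - 1) gchoose Suc j)"
    by (rule gbinomial_mult_1)
  hence "real (Suc j) * ((u - 1) gchoose Suc j) = (u - real (Suc j)) * ((u - 1) gchoose j)"
    by (simp add: algebra_simps)
  hence "((u - 1) gchoose Suc j) = (u - real (Suc j)) * ((u - 1) gchoose j) / real (Suc j)"
    by (simp add: field_simps del: of_nat_Suc)
  thus ?thesis unfolding binom_Digamma_def by (simp add: mult.assoc)
qed

lemma binom_Digamma_Suc_shift:
  "binom_Digamma (Suc j) c u = (u - 1) * binom_Digamma j (c - 1) (u - 1) / real (Suc j)"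
proof -
  have "real (Suc j) * ((u - 1) gchoose Suc j) = (u - 1) * ((u - 1 - 1) gchoose j)"
    by (rule gbinomial_absorption)
  hence "((u - 1) gchoose Suc j) = (u - 1) * ((u - 1 - 1) gchoose j) / real (Suc j)"
    by (simp add: field_simps del: of_nat_Suc)
  moreover have "u - 1 - (c - 1) = u - c" by simp
  ultimately show ?thesis unfolding binom_Digamma_def by (simp add: mult.assoc)
qed

lemma smooth_binom_Digamma: "smooth_on {u. u > c} (binom_Digamma n c)"
proof (induction n arbitrary: c)
  case 0
  have "smooth_on {x. x + (- c) \<in> {v. v > 0}} (\<lambda>x. Digamma (x + (- c)))"
    by (rule smooth_shift[OF smooth_Digamma])
  moreover have "{x. x + (- c) \<in> {v::real. v > 0}} = {u. u > c}" by auto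
  moreover have "(\<lambda>x. Digamma (x + (- c))) = binom_Digamma 0 c" by (auto simp: binom_Digamma_def fun_eq_iff)
  ultimately show ?case by simp
next
  case (Suc n)
  have U: "open {u::real. u > c}" by (simp add: open_Collect_less)
  have "smooth_on {u. u > c} (\<lambda>u. (1 / real (Suc n)) * ((u + (- real (Suc n))) * binom_Digamma n c u))"
    by (intro smooth_cmult smooth_linear_mult U Suc.IH)
  moreover have "(\<lambda>u. (1 / real (Suc n)) * ((u + (- real (Suc n))) * binom_Digamma n c u)) = binom_Digamma (Suc n) c"
    by (simp add: fun_eq_iff binom_Digamma_Suc)
  ultimately show ?case by simp
qed

lemma higher_deriv_binom_Digamma_Suc:
  assumes x: "x > c"
  shows "(deriv ^^ Suc j) (binom_Digamma (Suc j) c) x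
         = ((x - real (Suc j)) / real (Suc j)) * (deriv ^^ Suc j) (binom_Digamma j c) x + (deriv ^^ j) (binom_Digamma j c) x"
proof -
  have U: "open {u::real. u > c}" by (simp add: open_Collect_less)
  have xU: "x \<in> {u. u > c}" using x by simp
  have eq: "binom_Digamma (Suc j) c = (\<lambda>u. (1 / real (Suc j)) * ((u + (- real (Suc j))) * binom_Digamma j c u))"
    by (simp add: fun_eq_iff binom_Digamma_Suc)
  have "(deriv ^^ Suc j) (binom_Digamma (Suc j) c) x
      = (1 / real (Suc j)) * (deriv ^^ Suc j) (\<lambda>u. (u + (- real (Suc j))) * binom_Digamma j c u) x"
    unfolding eq by (rule higher_deriv_cmult[OF U smooth_linear_mult[OF U smooth_binom_Digamma] xU])
  also have "(deriv ^^ Suc j) (\<lambda>u. (u + (- real (Suc j))) * binom_Digamma j c u) x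
      = (x + (- real (Suc j))) * (deriv ^^ Suc j) (binom_Digamma j c) x + real (Suc j) * (deriv ^^ (Suc j - 1)) (binom_Digamma j c) x"
    by (rule higher_deriv_linear_mult[OF U smooth_binom_Digamma xU])
  finally show ?thesis by (simp add: field_simps del: of_nat_Suc)
qed

lemma higher_deriv_binom_Digamma_Suc_shift:
  assumes x: "x > c"
  shows "(deriv ^^ Suc j) (binom_Digamma (Suc j) c) x
         = ((x - 1) / real (Suc j)) * (deriv ^^ Suc j) (binom_Digamma j (c - 1)) (x - 1) + (deriv ^^ j) (binom_Digamma j (c - 1)) (x - 1)"
proof -
  define G where "G v = (v + 0) * binom_Digamma j (c - 1) v" for v
  have U: "open {u::real. u > c - 1}" by (simp add: open_Collect_less)
  have U': "open {u::real. u > c}" by (simp add: open_Collect_less)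
  have xU: "x - 1 \<in> {u. u > c - 1}" using x by simp
  have "smooth_on {u. u + (- 1) \<in> {u. u > c - 1}} (\<lambda>u. G (u + (- 1)))"
    unfolding G_def by (intro smooth_shift smooth_linear_mult U smooth_binom_Digamma)
  moreover have "{u. u + (- 1) \<in> {u. u > c - 1}} = {u::real. u > c}" by auto
  ultimately have smooth_G: "smooth_on {u. u > c} (\<lambda>u. G (u + (- 1)))" by simp
  have eq: "binom_Digamma (Suc j) c = (\<lambda>u. (1 / real (Suc j)) * G (u + (- 1)))"
    by (simp add: fun_eq_iff binom_Digamma_Suc_shift G_def)
  have "(deriv ^^ Suc j) (binom_Digamma (Suc j) c) x = (1 / real (Suc j)) * (deriv ^^ Suc j) (\<lambda>u. G (u + (- 1))) x"
    unfolding eq by (rule higher_deriv_cmult[OF U' smooth_G]) (use x in simp)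
  also have "(deriv ^^ Suc j) (\<lambda>u. G (u + (- 1))) x = (deriv ^^ Suc j) G (x - 1)"
    by (subst higher_deriv_shift) simp
  also have "\<dots> = (x - 1) * (deriv ^^ Suc j) (binom_Digamma j (c - 1)) (x - 1) + real (Suc j) * (deriv ^^ j) (binom_Digamma j (c - 1)) (x - 1)"
    using higher_deriv_linear_mult[OF U smooth_binom_Digamma xU, of "Suc j" 0] by (simp add: G_def[abs_def])
  finally show ?thesis by (simp add: field_simps del: of_nat_Suc)
qed

lemma higher_deriv_Suc_eq_inv_integral:
  assumes c: "c \<ge> 0" and y: "y > c"
    and g: "\<And>z. z > c \<Longrightarrow> (deriv ^^ j) g z = log_integral j z + C"
  shows "(deriv ^^ Suc j) g y = inv_integral (Suc j) y"
proof -
  have "eventually (\<lambda>z. z \<in> {z. z > c}) (nhds y)"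
    by (rule eventually_nhds_in_open) (auto simp: open_Collect_less y)
  hence ev: "eventually (\<lambda>z. (deriv ^^ j) g z = log_integral j z + C) (nhds y)"
    by (rule eventually_mono) (use g in simp)
  have "((\<lambda>z. log_integral j z + C) has_real_derivative inv_integral (Suc j) y + 0) (at y)"
    using c y by (intro DERIV_add has_real_derivative_log_integral DERIV_const) simp
  hence "((deriv ^^ j) g has_real_derivative inv_integral (Suc j) y) (at y)"
    using DERIV_cong_ev[OF refl ev refl] by simp
  thus ?thesis by (simp add: DERIV_imp_deriv)
qed

text \<open>The shift \<open>c\<close> may be any integer in \<open>[0, n]\<close>: the case \<open>c = 0\<close> follows the recurrence at
  \<open>x\<close>, a positive \<open>c\<close> the one shifting \<open>x\<close> and \<open>c\<close> by one.\<close>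

lemma log_integral_eq_higher_deriv:
  "c \<le> n \<Longrightarrow> x > real c \<Longrightarrow> log_integral n x = - harm n + (deriv ^^ n) (binom_Digamma n (real c)) x"
proof (induction n arbitrary: c x)
  case 0
  hence "c = 0" by simp
  with 0 show ?case by (simp add: log_integral_0_eq_Digamma binom_Digamma_def harm_def)
next
  case (Suc j)
  define N where "N = real (Suc j)"
  have deriv_IH: "(deriv ^^ Suc j) (binom_Digamma j (real c')) y = inv_integral (Suc j) y"
    if c': "c' \<le> j" and y: "y > real c'" for c' y
    by (rule higher_deriv_Suc_eq_inv_integral[OF _ y]) (use Suc.IH[OF c'] in auto)
  have harm_Suc': "harm (Suc j) = harm j + 1 / N" by (simp add: harm_Suc N_def inverse_eq_divide)
  show ?case
  proof (cases c)
    case 0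
    have x: "x > 0" using Suc.prems 0 by simp
    have "log_integral (Suc j) x = log_integral j x - 1 / N + ((x - N) / N) * inv_integral (Suc j) x"
      unfolding N_def by (rule log_integral_Suc[OF x])
    moreover have "(deriv ^^ Suc j) (binom_Digamma (Suc j) 0) x
        = ((x - N) / N) * (deriv ^^ Suc j) (binom_Digamma j 0) x + (deriv ^^ j) (binom_Digamma j 0) x"
      unfolding N_def by (rule higher_deriv_binom_Digamma_Suc[OF x])
    moreover have "log_integral j x = - harm j + (deriv ^^ j) (binom_Digamma j 0) x"
      using Suc.IH[of 0 x] x by simp
    moreover have "(deriv ^^ Suc j) (binom_Digamma j 0) x = inv_integral (Suc j) x"
      using deriv_IH[of 0 x] x by simp
    ultimately show ?thesis using harm_Suc' 0 by simp
  next
    case (Suc c')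
    have c': "c' \<le> j" using Suc.prems Suc by simp
    define y where "y = x - 1"
    have y: "y > real c'" using Suc.prems Suc by (simp add: y_def)
    have y0: "y > 0" using y by (meson of_nat_0_le_iff order.strict_trans1)
    have "log_integral (Suc j) (y + 1) = log_integral j y - 1 / N + (y / N) * inv_integral (Suc j) y"
      unfolding N_def by (rule log_integral_Suc_shift[OF y0])
    moreover have "(deriv ^^ Suc j) (binom_Digamma (Suc j) (real (Suc c'))) x
         = (y / N) * (deriv ^^ Suc j) (binom_Digamma j (real c')) y + (deriv ^^ j) (binom_Digamma j (real c')) y"
      using higher_deriv_binom_Digamma_Suc_shift[of "real (Suc c')" x j] Suc.prems Suc
      unfolding N_def y_def by simp
    moreover have "log_integral j y = - harm j + (deriv ^^ j) (binom_Digamma j (real c')) y"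
      using Suc.IH[OF c' y] .
    moreover have "(deriv ^^ Suc j) (binom_Digamma j (real c')) y = inv_integral (Suc j) y"
      using deriv_IH[OF c' y] .
    moreover have "x = y + 1" by (simp add: y_def)
    ultimately show ?thesis using harm_Suc' Suc by simp
  qed
qed

section \<open>The characteristic function of \<open>rho1\<close>\<close>

lemma rho1_nonneg: "rho1 y \<ge> 0"
  unfolding rho1_def by simp

lemma cosh_ge_exp_abs: "cosh (u::real) \<ge> exp \<bar>u\<bar> / 2"
proof -
  have "cosh u = (exp u + exp (- u)) / 2" by (simp add: cosh_def)
  moreover have "exp \<bar>u\<bar> \<le> exp u + exp (- u)"
  proof (cases "u \<ge> 0")
    case True thus ?thesis using exp_gt_zero[of "-u"] by simp
  next
    case False thus ?thesis using exp_gt_zero[of u] by simp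
  qed
  ultimately show ?thesis by simp
qed

lemma rho1_bound: "rho1 y \<le> 2 * pi * exp (- (2 * pi * \<bar>y\<bar>))"
proof -
  have c: "exp (pi * \<bar>y\<bar>) / 2 \<le> cosh (pi * y)"
    using cosh_ge_exp_abs[of "pi * y"] by (simp add: abs_mult)
  have "(exp (pi * \<bar>y\<bar>) / 2)^2 \<le> (cosh (pi * y))^2"
    using c by (intro power_mono) auto
  hence "exp (2 * pi * \<bar>y\<bar>) / 4 \<le> (cosh (pi * y))^2"
    by (simp add: power2_eq_square exp_add[symmetric] mult_ac)
  hence "(pi / 2) / (cosh (pi * y))^2 \<le> (pi / 2) / (exp (2 * pi * \<bar>y\<bar>) / 4)"
    by (intro divide_left_mono) auto
  also have "\<dots> = 2 * pi * exp (- (2 * pi * \<bar>y\<bar>))"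
    by (simp add: exp_minus field_simps)
  finally show ?thesis unfolding rho1_def .
qed

lemma rho1_cont: "continuous_on UNIV rho1"
  unfolding rho1_def[abs_def] by (auto intro!: continuous_intros)

lemma rho1_measurable [measurable]: "rho1 \<in> borel_measurable borel"
  by (rule borel_measurable_continuous_onI[OF rho1_cont])

lemma integrable_if_even:
  fixes f :: "real \<Rightarrow> 'b::{banach, second_countable_topology}"
  assumes even: "\<And>x. f (- x) = f x" and meas: "f \<in> borel_measurable lborel"
    and I: "set_integrable lborel {0<..} f"
  shows "integrable lborel f"
proof -
  have I': "set_integrable lborel {..<0} f"
  proof -
    have "integrable lborel (\<lambda>x. indicator {0<..} (0 + (-1) * x) *\<^sub>R f (0 + (-1) * x))"
      using I unfolding set_integrable_def by (subst lborel_integrable_real_affine_iff) auto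
    moreover have "(\<lambda>x. indicator {0<..} (0 + (-1) * x) *\<^sub>R f (0 + (-1) * x)) = (\<lambda>x. indicator {..<0} x *\<^sub>R f x)"
      by (auto simp: fun_eq_iff indicator_def even)
    ultimately show ?thesis unfolding set_integrable_def by simp
  qed
  have "set_integrable lborel ({0<..} \<union> {..<0}) f"
    by (rule set_integrable_Un[OF I I']) auto
  hence "integrable lborel (\<lambda>x. indicator ({0<..} \<union> {..<0}) x *\<^sub>R f x)"
    unfolding set_integrable_def .
  thus ?thesis
  proof (rule integrable_cong_AE_imp)
    show "f \<in> borel_measurable lborel" by (rule meas)
    show "AE x in lborel. indicator ({0<..} \<union> {..<0}) x *\<^sub>R f x = f x"
      using AE_lborel_singleton[of "0::real"] by eventually_elim (auto simp: indicator_def)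
  qed
qed

lemma integrable_exp_neg_abs:
  fixes d :: real
  assumes d: "d > 0"
  shows "integrable lborel (\<lambda>y. (1 + \<bar>y\<bar>) * exp (- (d * \<bar>y\<bar>)))"
proof (rule integrable_if_even[where f = "\<lambda>y. (1 + \<bar>y\<bar>) * exp (- (d * \<bar>y\<bar>))"])
  show "set_integrable lborel {0<..} (\<lambda>y. (1 + \<bar>y\<bar>) * exp (- (d * \<bar>y\<bar>)))"
  proof (rule set_integrable_cong[THEN iffD1, OF refl refl _ set_integrable_poly_exp_neg[OF d, of 1]])
    fix x :: real assume "x \<in> {0<..}"
    thus "(1 + x) ^ 1 * exp (- (d * x)) = (1 + \<bar>x\<bar>) * exp (- (d * \<bar>x\<bar>))" by simp
  qed
qed auto

lemma integrable_rho1_times_id: "integrable lborel (\<lambda>x. rho1 x * x)"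
proof (rule Bochner_Integration.integrable_bound)
  show "integrable lborel (\<lambda>y. 2 * pi * ((1 + \<bar>y\<bar>) * exp (- (2 * pi * \<bar>y\<bar>))))"
    using integrable_exp_neg_abs[of "2 * pi"] by simp
  show "(\<lambda>x. rho1 x * x) \<in> borel_measurable lborel" by measurable
  show "AE x in lborel. norm (rho1 x * x) \<le> norm (2 * pi * ((1 + \<bar>x\<bar>) * exp (- (2 * pi * \<bar>x\<bar>))))"
  proof (intro AE_I2)
    fix x :: real
    have "norm (rho1 x * x) = rho1 x * \<bar>x\<bar>" using rho1_nonneg[of x] by (simp add: abs_mult)
    also have "\<dots> \<le> (2 * pi * exp (- (2 * pi * \<bar>x\<bar>))) * (1 + \<bar>x\<bar>)"
      using rho1_bound[of x] rho1_nonneg[of x] by (intro mult_mono) auto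
    also have "\<dots> = norm (2 * pi * ((1 + \<bar>x\<bar>) * exp (- (2 * pi * \<bar>x\<bar>))))"
      by (simp add: abs_mult mult_ac)
    finally show "norm (rho1 x * x) \<le> norm (2 * pi * ((1 + \<bar>x\<bar>) * exp (- (2 * pi * \<bar>x\<bar>))))" .
  qed
qed

definition rho1_mgf :: "complex \<Rightarrow> complex" where
  "rho1_mgf z = (\<integral>y. complex_of_real (rho1 y) * exp (z * complex_of_real y) \<partial>lborel)"

lemma rho1_mgf_integrand_le:
  assumes "\<bar>Re z\<bar> \<le> R"
  shows "norm (complex_of_real (rho1 y) * exp (z * complex_of_real y)) \<le> 2 * pi * exp (- ((2 * pi - R) * \<bar>y\<bar>))"
proof -
  have "Re z * y \<le> \<bar>Re z * y\<bar>" by (rule abs_ge_self)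
  also have "\<dots> = \<bar>Re z\<bar> * \<bar>y\<bar>" by (rule abs_mult)
  also have "\<dots> \<le> R * \<bar>y\<bar>" using assms by (intro mult_right_mono) auto
  finally have "Re z * y \<le> R * \<bar>y\<bar>" .
  hence e: "exp (Re z * y) \<le> exp (R * \<bar>y\<bar>)" by simp
  have "norm (complex_of_real (rho1 y) * exp (z * complex_of_real y)) = rho1 y * exp (Re z * y)"
    using rho1_nonneg[of y] by (simp add: norm_mult)
  also have "\<dots> \<le> 2 * pi * exp (- (2 * pi * \<bar>y\<bar>)) * exp (R * \<bar>y\<bar>)"
    using rho1_bound[of y] e rho1_nonneg[of y] by (intro mult_mono) auto
  also have "\<dots> = 2 * pi * exp (- ((2 * pi - R) * \<bar>y\<bar>))"
    by (simp add: mult.assoc exp_add[symmetric] algebra_simps)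
  finally show ?thesis .
qed

lemma integrable_rho1_mgf:
  assumes "\<bar>Re z\<bar> < 2 * pi"
  shows "integrable lborel (\<lambda>y. complex_of_real (rho1 y) * exp (z * complex_of_real y))"
proof (rule Bochner_Integration.integrable_bound)
  define d where "d = 2 * pi - \<bar>Re z\<bar>"
  have d: "d > 0" using assms by (simp add: d_def)
  show "integrable lborel (\<lambda>y. 2 * pi * ((1 + \<bar>y\<bar>) * exp (- (d * \<bar>y\<bar>))))"
    using integrable_exp_neg_abs[OF d] by simp
  show "(\<lambda>y. complex_of_real (rho1 y) * exp (z * complex_of_real y)) \<in> borel_measurable lborel"
    by measurable
  show "AE y in lborel. norm (complex_of_real (rho1 y) * exp (z * complex_of_real y)) \<le> norm (2 * pi * ((1 + \<bar>y\<bar>) * exp (- (d * \<bar>y\<bar>))))"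
  proof (intro AE_I2)
    fix y :: real
    have "norm (complex_of_real (rho1 y) * exp (z * complex_of_real y)) \<le> 2 * pi * exp (- ((2 * pi - \<bar>Re z\<bar>) * \<bar>y\<bar>))"
      by (rule rho1_mgf_integrand_le) simp
    also have "\<dots> = 2 * pi * (1 * exp (- (d * \<bar>y\<bar>)))" by (simp add: d_def)
    also have "\<dots> \<le> 2 * pi * ((1 + \<bar>y\<bar>) * exp (- (d * \<bar>y\<bar>)))"
      by (intro mult_left_mono mult_right_mono) auto
    also have "\<dots> = norm (2 * pi * ((1 + \<bar>y\<bar>) * exp (- (d * \<bar>y\<bar>))))"
      by (simp add: abs_mult)
    finally show "norm (complex_of_real (rho1 y) * exp (z * complex_of_real y)) \<le> norm (2 * pi * ((1 + \<bar>y\<bar>) * exp (- (d * \<bar>y\<bar>))))" .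
  qed
qed

definition mgf_strip :: "complex set" where "mgf_strip = {z. \<bar>Re z\<bar> < 2 * pi}"

lemma open_mgf_strip: "open mgf_strip"
proof -
  have eq: "mgf_strip = {z. Re z > -2*pi} \<inter> {z. Re z < 2*pi}" by (auto simp: mgf_strip_def abs_less_iff)
  show ?thesis unfolding eq by (intro open_Int open_halfspace_Re_gt open_halfspace_Re_lt)
qed

lemma convex_mgf_strip: "convex mgf_strip"
proof -
  have eq: "mgf_strip = {z. Re z > -2*pi} \<inter> {z. Re z < 2*pi}" by (auto simp: mgf_strip_def abs_less_iff)
  show ?thesis unfolding eq by (intro convex_Int convex_halfspace_Re_gt convex_halfspace_Re_lt)
qed

lemma norm_rho1_mgf_deriv_integrand_le:
  assumes "\<bar>Re z\<bar> \<le> R"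
  shows "norm (complex_of_real (rho1 y) * (complex_of_real y * exp (z * complex_of_real y)))
           \<le> 2 * pi * ((1 + \<bar>y\<bar>) * exp (- ((2 * pi - R) * \<bar>y\<bar>)))"
proof -
  have "norm (complex_of_real (rho1 y) * (complex_of_real y * exp (z * complex_of_real y)))
      = \<bar>y\<bar> * norm (complex_of_real (rho1 y) * exp (z * complex_of_real y))"
    by (simp add: norm_mult)
  also have "\<dots> \<le> \<bar>y\<bar> * (2 * pi * exp (- ((2 * pi - R) * \<bar>y\<bar>)))"
    by (intro mult_left_mono rho1_mgf_integrand_le assms) auto
  also have "\<dots> \<le> 2 * pi * ((1 + \<bar>y\<bar>) * exp (- ((2 * pi - R) * \<bar>y\<bar>)))"
    by (simp add: algebra_simps)
  finally show ?thesis .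
qed

lemma rho1_mgf_holomorphic: "rho1_mgf holomorphic_on mgf_strip"
  unfolding holomorphic_on_open[OF open_mgf_strip]
proof
  fix z0 assume z0: "z0 \<in> mgf_strip"
  define r where "r = (2 * pi - \<bar>Re z0\<bar>) / 2"
  define R where "R = \<bar>Re z0\<bar> + r"
  have r: "r > 0" and R: "R < 2 * pi" using z0 by (simp_all add: mgf_strip_def r_def R_def field_simps)
  have ball_R: "\<bar>Re z\<bar> \<le> R" if "z \<in> ball z0 r" for z
  proof -
    have "\<bar>Re z - Re z0\<bar> \<le> norm (z - z0)" using abs_Re_le_cmod[of "z - z0"] by simp
    also have "\<dots> < r" using that by (simp add: dist_norm norm_minus_commute)
    finally show ?thesis unfolding R_def by linarith
  qed
  have "(rho1_mgf has_field_derivative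
          (\<integral>y. complex_of_real (rho1 y) * (complex_of_real y * exp (z0 * complex_of_real y)) \<partial>lborel)) (at z0)"
    unfolding rho1_mgf_def[abs_def]
  proof (rule has_field_derivative_integral_param[OF r,
        where g = "\<lambda>y. 2 * pi * ((1 + \<bar>y\<bar>) * exp (- ((2 * pi - R) * \<bar>y\<bar>)))"])
    fix z assume z: "z \<in> ball z0 r"
    show "integrable lborel (\<lambda>y. complex_of_real (rho1 y) * exp (z * complex_of_real y))"
      by (rule integrable_rho1_mgf) (use ball_R[OF z] R in linarith)
    fix y :: real
    show "((\<lambda>z. complex_of_real (rho1 y) * exp (z * complex_of_real y)) has_field_derivative
            complex_of_real (rho1 y) * (complex_of_real y * exp (z * complex_of_real y))) (at z)"
      by (auto intro!: derivative_eq_intros simp: mult_ac)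
    show "norm (complex_of_real (rho1 y) * (complex_of_real y * exp (z * complex_of_real y)))
        \<le> 2 * pi * ((1 + \<bar>y\<bar>) * exp (- ((2 * pi - R) * \<bar>y\<bar>)))"
      by (rule norm_rho1_mgf_deriv_integrand_le[OF ball_R[OF z]])
  next
    show "integrable lborel (\<lambda>y. 2 * pi * ((1 + \<bar>y\<bar>) * exp (- ((2 * pi - R) * \<bar>y\<bar>))))"
      using integrable_exp_neg_abs[of "2 * pi - R"] R by simp
    show "(\<lambda>y. complex_of_real (rho1 y) * (complex_of_real y * exp (z0 * complex_of_real y))) \<in> borel_measurable lborel"
      by measurable
  qed
  thus "\<exists>f'. (rho1_mgf has_field_derivative f') (at z0)" by blast
qed

definition rho1_cdf :: "real \<Rightarrow> real" where "rho1_cdf y = 1 / (1 + exp (- (2 * pi * y)))"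

lemma rho1_logistic: "rho1 y = 2 * pi * exp (- (2 * pi * y)) / (1 + exp (- (2 * pi * y)))^2"
proof -
  define E where "E = exp (- (pi * y))"
  have E: "E > 0" by (simp add: E_def)
  have e1: "exp (pi * y) = 1 / E" by (simp add: E_def exp_minus field_simps)
  have e2: "exp (- (2 * pi * y)) = E^2" by (simp add: E_def power2_eq_square exp_add[symmetric])
  have ch: "cosh (pi * y) = (1 / E + E) / 2" by (simp add: cosh_def e1 E_def)
  have "rho1 y = (pi / 2) / ((1 / E + E) / 2)^2" by (simp only: rho1_def ch)
  also have "\<dots> = 2 * pi * E^2 / (1 + E^2)^2"
    using E by (simp add: field_simps power2_eq_square)
  finally show ?thesis by (simp add: e2)
qed

lemma rho1_cdf_deriv: "(rho1_cdf has_real_derivative rho1 y) (at y)"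
proof -
  have pos: "1 + exp (- (2 * pi * y)) > 0" by (intro add_pos_pos) auto
  have "(rho1_cdf has_real_derivative (2 * pi * exp (- (2 * pi * y))) / (1 + exp (- (2 * pi * y)))^2) (at y)"
    unfolding rho1_cdf_def[abs_def] using pos
    by (auto intro!: derivative_eq_intros simp: power2_eq_square field_simps)
  thus ?thesis by (simp add: rho1_logistic)
qed

lemma rho1_cdf_range: "0 < rho1_cdf y" "rho1_cdf y < 1"
  unfolding rho1_cdf_def by (auto simp: divide_less_eq add_pos_pos)

lemma rho1_cdf_ratio: "rho1_cdf y / (1 - rho1_cdf y) = exp (2 * pi * y)"
proof -
  define E where "E = exp (- (2 * pi * y))"
  have E: "E > 0" by (simp add: E_def)
  have "rho1_cdf y / (1 - rho1_cdf y) = 1 / E" unfolding rho1_cdf_def E_def[symmetric] using E by (simp add: field_simps)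
  thus ?thesis by (simp add: E_def exp_minus field_simps)
qed

lemma integrable_exp_rho1:
  assumes c: "\<bar>c\<bar> < 1"
  shows "integrable lborel (\<lambda>y. exp (2 * pi * c * y) * rho1 y)"
proof -
  have "\<bar>Re (complex_of_real (2 * pi * c))\<bar> < 2 * pi" using c by (simp add: abs_mult)
  from integrable_rho1_mgf[OF this]
  have "integrable lborel (\<lambda>y. complex_of_real (rho1 y) * exp (complex_of_real (2 * pi * c) * complex_of_real y))" .
  moreover have "(\<lambda>y. complex_of_real (rho1 y) * exp (complex_of_real (2 * pi * c) * complex_of_real y))
      = (\<lambda>y. complex_of_real (exp (2 * pi * c * y) * rho1 y))"
    by (simp only: of_real_mult[symmetric] exp_of_real mult.commute)
  ultimately show ?thesis by (simp only: complex_of_real_integrable_eq)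
qed

text \<open>A Beta integral after the substitution \<open>v = rho1_cdf y\<close>.\<close>

lemma integral_exp_rho1:
  assumes c: "\<bar>c\<bar> < 1"
  shows "(\<integral>y. exp (2 * pi * c * y) * rho1 y \<partial>lborel) = Gamma (1 + c) * Gamma (1 - c)"
proof -
  define f where "f v = (v / (1 - v)) powr c" for v :: real
  have fg: "f (rho1_cdf y) = exp (2 * pi * c * y)" for y
    unfolding f_def rho1_cdf_ratio by (simp add: powr_def mult_ac)
  have einf: "einterval (-\<infinity>) \<infinity> = (UNIV :: real set)" by (auto simp: einterval_def)
  have e01: "einterval 0 1 = {0<..<1::real}" by (auto simp: einterval_def zero_ereal_def one_ereal_def)
  have rc: "isCont rho1 x" for x using rho1_cont by (simp add: continuous_on_eq_continuous_at)
  note S = interval_integral_substitution_nonneg[of "-\<infinity>" \<infinity> rho1_cdf rho1 f "ereal 0" "ereal 1"]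
  have hyps: "set_integrable lborel (einterval (-\<infinity>) \<infinity>) (\<lambda>x. f (rho1_cdf x) * rho1 x)"
    unfolding einf fg set_integrable_def using integrable_exp_rho1[OF c] by simp
  have contf: "isCont f (rho1_cdf x)" for x
    unfolding f_def using rho1_cdf_range[of x] by (auto intro!: continuous_intros)
  have A: "((ereal \<circ> rho1_cdf \<circ> real_of_ereal) \<longlongrightarrow> ereal 0) (at_right (-\<infinity>))"
  proof -
    have "(rho1_cdf \<longlongrightarrow> 0) at_bot" unfolding rho1_cdf_def[abs_def] by real_asymp
    thus ?thesis unfolding ereal_tendsto_simps o_assoc[symmetric] by (simp add: o_def)
  qed
  have B: "((ereal \<circ> rho1_cdf \<circ> real_of_ereal) \<longlongrightarrow> ereal 1) (at_left \<infinity>)"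
  proof -
    have "(rho1_cdf \<longlongrightarrow> 1) at_top" unfolding rho1_cdf_def[abs_def] by real_asymp
    thus ?thesis unfolding ereal_tendsto_simps o_assoc[symmetric] by (simp add: o_def)
  qed
  have R1: "set_integrable lborel (einterval (ereal 0) (ereal 1)) f"
   and R2: "(LBINT x=ereal 0..ereal 1. f x) = (LBINT x=-\<infinity>..\<infinity>. f (rho1_cdf x) * rho1 x)"
    using S[OF _ rho1_cdf_deriv contf rc _ _ A B hyps]
    by (auto simp: rho1_nonneg f_def rho1_cont continuous_on_eq_continuous_at rho1_cdf_range)
  have "(LBINT x=-\<infinity>..\<infinity>. f (rho1_cdf x) * rho1 x) = (\<integral>y. exp (2 * pi * c * y) * rho1 y \<partial>lborel)"
    by (simp add: interval_lebesgue_integral_def set_lebesgue_integral_def einf fg)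
  moreover have "(LBINT x=ereal 0..ereal 1. f x) = integral {0<..<1} f"
    using R1 unfolding e01[unfolded zero_ereal_def one_ereal_def]
    by (simp add: interval_lebesgue_integral_def set_borel_integral_eq_integral)
  moreover have "integral {0<..<1} f = integral {0<..<1} (\<lambda>t. t powr (1 + c - 1) * (1 - t) powr (1 - c - 1))"
    by (intro integral_cong) (auto simp: f_def powr_divide powr_minus_divide)
  moreover have "\<dots> = integral {0..1} (\<lambda>t. t powr (1 + c - 1) * (1 - t) powr (1 - c - 1))"
    by (rule integral_open_interval_real[symmetric])
  moreover have "\<dots> = Beta (1 + c) (1 - c)"
    using has_integral_Beta_real[of "1 + c" "1 - c"] c by (auto dest: integral_unique)
  moreover have "Beta (1 + c) (1 - c) = Gamma (1 + c) * Gamma (1 - c)"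
    by (simp add: Beta_def Gamma_numeral)
  ultimately show ?thesis using R2 by simp
qed

lemma rho1_mgf_of_real:
  assumes c: "\<bar>c\<bar> < 1"
  shows "rho1_mgf (complex_of_real (2 * pi * c)) = complex_of_real (Gamma (1 + c) * Gamma (1 - c))"
proof -
  have "rho1_mgf (complex_of_real (2 * pi * c)) = (\<integral>y. complex_of_real (exp (2 * pi * c * y) * rho1 y) \<partial>lborel)"
    unfolding rho1_mgf_def by (simp only: of_real_mult[symmetric] exp_of_real mult.commute)
  also have "\<dots> = complex_of_real (\<integral>y. exp (2 * pi * c * y) * rho1 y \<partial>lborel)"
    by (rule integral_complex_of_real)
  finally show ?thesis using integral_exp_rho1[OF c] by simp
qed

definition Gamma_product :: "complex \<Rightarrow> complex" where
  "Gamma_product z = Gamma (1 + z / (2 * complex_of_real pi)) * Gamma (1 - z / (2 * complex_of_real pi))"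

lemma Re_pos_not_nonpos_Ints: "Re w > 0 \<Longrightarrow> w \<notin> \<int>\<^sub>\<le>\<^sub>0"
  by (auto elim!: nonpos_Ints_cases)

lemma Gamma_product_holomorphic: "Gamma_product holomorphic_on mgf_strip"
proof -
  have "Re (1 + z / (2 * complex_of_real pi)) > 0" "Re (1 - z / (2 * complex_of_real pi)) > 0"
    if "z \<in> mgf_strip" for z
  proof -
    have "\<bar>Re z\<bar> < 2 * pi" using that by (simp add: mgf_strip_def)
    hence "\<bar>Re z / (2 * pi)\<bar> < 1" by (simp add: abs_divide)
    moreover have "Re (z / (2 * complex_of_real pi)) = Re z / (2 * pi)"
      by (simp add: Re_divide_of_real[where r = "2 * pi", simplified])
    ultimately show "Re (1 + z / (2 * complex_of_real pi)) > 0" "Re (1 - z / (2 * complex_of_real pi)) > 0"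
      by (auto simp: abs_less_iff field_simps pi_gt_zero)
  qed
  thus ?thesis unfolding Gamma_product_def[abs_def]
    by (intro holomorphic_intros holomorphic_Gamma') (auto intro!: Re_pos_not_nonpos_Ints)
qed

lemma Gamma_product_of_real:
  assumes c: "\<bar>c\<bar> < 1"
  shows "Gamma_product (complex_of_real (2 * pi * c)) = complex_of_real (Gamma (1 + c) * Gamma (1 - c))"
proof -
  have "complex_of_real (2 * pi * c) / (2 * complex_of_real pi) = complex_of_real c"
    by (simp add: field_simps)
  thus ?thesis unfolding Gamma_product_def by (simp add: Gamma_complex_of_real[symmetric])
qed

text \<open>Analytic continuation from the real segment, where both sides are known by \<open>integral_exp_rho1\<close>.\<close>

lemma rho1_mgf_eq_Gamma_product:
  assumes z: "z \<in> mgf_strip"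
  shows "rho1_mgf z = Gamma_product z"
proof -
  define U where "U = complex_of_real ` {-pi<..<pi}"
  have "(\<lambda>z. rho1_mgf z - Gamma_product z) z = 0"
  proof (rule analytic_continuation[of "\<lambda>z. rho1_mgf z - Gamma_product z" mgf_strip U 0 z])
    show "(\<lambda>z. rho1_mgf z - Gamma_product z) holomorphic_on mgf_strip"
      by (intro holomorphic_on_diff rho1_mgf_holomorphic Gamma_product_holomorphic)
    show "open mgf_strip" by (rule open_mgf_strip)
    show "connected mgf_strip" by (rule convex_connected[OF convex_mgf_strip])
    show "U \<subseteq> mgf_strip" by (auto simp: U_def mgf_strip_def)
    show "0 \<in> mgf_strip" by (simp add: mgf_strip_def)
    show "z \<in> mgf_strip" by (rule z)
    show "0 islimpt U"
      unfolding islimpt_approachable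
    proof (intro allI impI)
      fix e :: real assume e: "e > 0"
      define r where "r = min (e / 2) 1"
      have r: "r > 0" "r < e" "r < pi" using e pi_gt3 by (auto simp: r_def)
      show "\<exists>x'\<in>U. x' \<noteq> 0 \<and> dist x' 0 < e"
        by (rule bexI[of _ "complex_of_real r"]) (use r in \<open>auto simp: U_def\<close>)
    qed
    fix w assume "w \<in> U"
    then obtain r where r: "r \<in> {-pi<..<pi}" and w: "w = complex_of_real r" by (auto simp: U_def)
    define c where "c = r / (2 * pi)"
    have c: "\<bar>c\<bar> < 1" using r pi_gt3 by (auto simp: c_def abs_less_iff field_simps)
    have "w = complex_of_real (2 * pi * c)" by (simp add: w c_def)
    thus "rho1_mgf w - Gamma_product w = 0" using rho1_mgf_of_real[OF c] Gamma_product_of_real[OF c] by simp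
  qed
  thus ?thesis by simp
qed

lemma sin_ii_times_of_real: "sin (\<i> * complex_of_real u) = \<i> * complex_of_real (sinh u)"
proof -
  have "sin (\<i> * complex_of_real u) = \<i> * ((exp (complex_of_real u) - inverse (exp (complex_of_real u))) / 2)"
    by (rule sin_i_times)
  also have "exp (complex_of_real u) = complex_of_real (exp u)"
    by (rule exp_of_real)
  also have "(complex_of_real (exp u) - inverse (complex_of_real (exp u))) / 2 = complex_of_real (sinh u)"
    by (simp add: sinh_def exp_minus)
  finally show ?thesis .
qed

lemma Gamma_product_ii_times:
  assumes s: "s \<noteq> 0"
  shows "Gamma_product (\<i> * complex_of_real s) = complex_of_real ((s / 2) / sinh (s / 2))"
proof -
  define w where "w = \<i> * complex_of_real s / (2 * complex_of_real pi)"
  have "Im w = s / (2 * pi)" by (simp add: w_def Im_divide_of_real[where r = "2*pi", simplified])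
  hence w: "w \<notin> \<int>\<^sub>\<le>\<^sub>0" using s by (auto elim!: nonpos_Ints_cases)
  have "Gamma_product (\<i> * complex_of_real s) = Gamma (w + 1) * Gamma (1 - w)"
    unfolding Gamma_product_def w_def by (simp add: add.commute)
  also have "\<dots> = w * (Gamma w * Gamma (1 - w))" by (simp add: Gamma_plus1[OF w])
  also have "\<dots> = w * (complex_of_real pi / sin (complex_of_real pi * w))"
    by (simp add: Gamma_reflection_complex)
  also have "complex_of_real pi * w = \<i> * complex_of_real (s / 2)"
    by (simp add: w_def field_simps)
  also have "sin (\<i> * complex_of_real (s / 2)) = \<i> * complex_of_real (sinh (s / 2))"
    by (rule sin_ii_times_of_real)
  also have "w * (complex_of_real pi / (\<i> * complex_of_real (sinh (s / 2)))) = complex_of_real ((s / 2) / sinh (s / 2))"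
    using s by (simp add: w_def field_simps)
  finally show ?thesis .
qed

lemma rho1_char:
  assumes s: "s \<noteq> 0"
  shows "(\<integral>y. complex_of_real (rho1 y) * iexp (s * y) \<partial>lborel) = complex_of_real ((s / 2) / sinh (s / 2))"
proof -
  have "(\<integral>y. complex_of_real (rho1 y) * iexp (s * y) \<partial>lborel) = rho1_mgf (\<i> * complex_of_real s)"
    unfolding rho1_mgf_def by (simp add: mult_ac)
  also have "\<dots> = Gamma_product (\<i> * complex_of_real s)"
    by (rule rho1_mgf_eq_Gamma_product) (simp add: mgf_strip_def)
  finally show ?thesis using Gamma_product_ii_times[OF s] by simp
qed

lemma char_distributed_rho1:
  assumes D: "distributed M lborel X (\<lambda>t. ennreal (rho1 t))" and u: "u \<noteq> 0"
  shows "char (distr M borel X) u = complex_of_real ((u / 2) / sinh (u / 2))"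
proof -
  have "distr M borel X = distr M lborel X" by (rule distr_cong) auto
  also have "\<dots> = density lborel (\<lambda>t. ennreal (rho1 t))" by (rule distributed_distr_eq_density[OF D])
  finally have e: "distr M borel X = density lborel (\<lambda>t. ennreal (rho1 t))" .
  have "char (distr M borel X) u = (\<integral>y. iexp (u * y) \<partial>density lborel (\<lambda>t. ennreal (rho1 t)))"
    unfolding char_def e ..
  also have "\<dots> = (\<integral>y. rho1 y *\<^sub>R iexp (u * y) \<partial>lborel)"
    by (rule integral_density) (auto simp: rho1_nonneg)
  also have "\<dots> = (\<integral>y. complex_of_real (rho1 y) * iexp (u * y) \<partial>lborel)"
    by (simp add: scaleR_conv_of_real)
  also have "\<dots> = complex_of_real ((u / 2) / sinh (u / 2))" by (rule rho1_char[OF u])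
  finally show ?thesis .
qed

lemma (in prob_space) char_sum_indep_rho1:
  assumes indep: "indep_vars (\<lambda>_. borel) L A"
    and D: "\<And>i. i \<in> A \<Longrightarrow> distributed M lborel (L i) (\<lambda>t. ennreal (rho1 t))"
    and u: "u \<noteq> 0"
  shows "(CLINT \<omega>|M. iexp (u * (\<Sum>i\<in>A. L i \<omega>))) = complex_of_real (((u / 2) / sinh (u / 2)) ^ card A)"
proof -
  have "(\<lambda>\<omega>. \<Sum>i\<in>A. L i \<omega>) \<in> borel_measurable M"
    using distributed_measurable[OF D] by (intro borel_measurable_sum) simp
  hence "(CLINT \<omega>|M. iexp (u * (\<Sum>i\<in>A. L i \<omega>))) = char (distr M borel (\<lambda>\<omega>. \<Sum>i\<in>A. L i \<omega>)) u"
    unfolding char_def by (intro integral_distr[symmetric]) auto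
  also have "\<dots> = (\<Prod>i\<in>A. char (distr M borel (L i)) u)"
    by (rule char_distr_sum[OF indep])
  also have "\<dots> = (\<Prod>i\<in>A. complex_of_real ((u / 2) / sinh (u / 2)))"
    by (intro prod.cong refl char_distributed_rho1[OF D u])
  finally show ?thesis by simp
qed

section \<open>Frullani's integral under the expectation\<close>

lemma (in prob_space) integrable_frullani_pair:
  assumes S: "integrable M S" and a: "a > 0"
  shows "integrable (M \<Otimes>\<^sub>M lborel)
           (\<lambda>(\<omega>, t). indicator {0<..} t *\<^sub>R frullani (of_real a + \<i> * of_real (S \<omega>)) t)"
proof -
  interpret pair_sigma_finite M lborel
    by (intro pair_sigma_finite.intro sigma_finite_measure_axioms lborel.sigma_finite_measure_axioms)
  define z where "z \<omega> = complex_of_real a + \<i> * complex_of_real (S \<omega>)" for \<omega>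
  define c where "c = min 1 a"
  have c: "c > 0" "c \<le> 1" "c \<le> Re (z \<omega>)" for \<omega> using a by (auto simp: c_def z_def)
  have [measurable]: "S \<in> borel_measurable M" using S by auto
  have norm_le: "(\<integral>t. norm (indicator {0<..} t *\<^sub>R frullani (z \<omega>) t) \<partial>lborel) \<le> (\<bar>a - 1\<bar> + \<bar>S \<omega>\<bar>) / c" for \<omega>
  proof -
    have "z \<omega> - 1 = complex_of_real (a - 1) + \<i> * complex_of_real (S \<omega>)" by (simp add: z_def)
    hence "norm (z \<omega> - 1) \<le> norm (complex_of_real (a - 1)) + norm (\<i> * complex_of_real (S \<omega>))"
      by (simp only: norm_triangle_ineq)
    also have "\<dots> = \<bar>a - 1\<bar> + \<bar>S \<omega>\<bar>"
      by (simp add: norm_mult del: of_real_diff)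
    finally have "norm (z \<omega> - 1) / c \<le> (\<bar>a - 1\<bar> + \<bar>S \<omega>\<bar>) / c"
      using c(1) by (intro divide_right_mono) auto
    with integral_norm_frullani_le[OF c] show ?thesis by (rule order.trans)
  qed
  show ?thesis unfolding z_def[symmetric]
  proof (rule Fubini_integrable, simp_all only: prod.case)
    show "(\<lambda>(\<omega>, t). indicator {0<..} t *\<^sub>R frullani (z \<omega>) t) \<in> borel_measurable (M \<Otimes>\<^sub>M lborel)"
      unfolding frullani_def z_def by measurable
    show "AE \<omega> in M. integrable lborel (\<lambda>t. indicator {0<..} t *\<^sub>R frullani (z \<omega>) t)"
      using set_integrable_frullani[of "z \<omega>" for \<omega>] a unfolding set_integrable_def by (simp add: z_def)
    show "integrable M (\<lambda>\<omega>. \<integral>t. norm (indicator {0<..} t *\<^sub>R frullani (z \<omega>) t) \<partial>lborel)"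
    proof (rule Bochner_Integration.integrable_bound)
      show "integrable M (\<lambda>\<omega>. (\<bar>a - 1\<bar> + \<bar>S \<omega>\<bar>) / c)"
        using S by (intro integrable_divide Bochner_Integration.integrable_add) auto
      show "(\<lambda>\<omega>. \<integral>t. norm (indicator {0<..} t *\<^sub>R frullani (z \<omega>) t) \<partial>lborel) \<in> borel_measurable M"
        unfolding frullani_def z_def by measurable
      show "AE \<omega> in M. norm (\<integral>t. norm (indicator {0<..} t *\<^sub>R frullani (z \<omega>) t) \<partial>lborel)
          \<le> norm ((\<bar>a - 1\<bar> + \<bar>S \<omega>\<bar>) / c)"
        using norm_le c(1) by (intro AE_I2) (simp add: Bochner_Integration.integral_nonneg)
    qed
  qed
qed

lemma (in prob_space) expectation_frullani:
  assumes t: "t > 0" and [measurable]: "S \<in> borel_measurable M"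
  shows "(CLINT \<omega>|M. frullani (of_real a + \<i> * of_real (S \<omega>)) t)
           = (of_real (exp (- t)) - of_real (exp (- (t * a))) * (CLINT \<omega>|M. iexp ((- t) * S \<omega>))) / of_real t"
proof -
  have "frullani (of_real a + \<i> * of_real (S \<omega>)) t
      = (of_real (exp (- t)) - of_real (exp (- (t * a))) * iexp ((- t) * S \<omega>)) / of_real t" for \<omega>
  proof -
    have "- (complex_of_real t * (of_real a + \<i> * of_real (S \<omega>)))
        = complex_of_real (- (t * a)) + \<i> * complex_of_real ((- t) * S \<omega>)"
      by (simp add: algebra_simps)
    thus ?thesis unfolding frullani_def by (simp only: exp_add exp_of_real of_real_minus[symmetric])
  qed
  moreover have "integrable M (\<lambda>\<omega>. iexp ((- t) * S \<omega>))"
    by (rule integrable_const_bound[where B = 1]) auto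
  ultimately show ?thesis by (simp add: prob_space)
qed

lemma (in prob_space) expectation_Ln_eq_integral_char:
  assumes S: "integrable M S" and a: "a > 0"
  shows "(CLINT \<omega>|M. Ln (of_real a + \<i> * of_real (S \<omega>)))
           = (CLINT t|lborel. indicator {0<..} t *\<^sub>R
               ((of_real (exp (- t)) - of_real (exp (- (t * a))) * (CLINT \<omega>|M. iexp ((- t) * S \<omega>))) / of_real t))"
proof -
  interpret pair_sigma_finite M lborel
    by (intro pair_sigma_finite.intro sigma_finite_measure_axioms lborel.sigma_finite_measure_axioms)
  have "(CLINT \<omega>|M. Ln (of_real a + \<i> * of_real (S \<omega>)))
      = (CLINT \<omega>|M. CLINT t|lborel. indicator {0<..} t *\<^sub>R frullani (of_real a + \<i> * of_real (S \<omega>)) t)"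
    using integral_frullani_eq_Ln a by (simp add: set_lebesgue_integral_def)
  also have "\<dots> = (CLINT t|lborel. CLINT \<omega>|M. indicator {0<..} t *\<^sub>R frullani (of_real a + \<i> * of_real (S \<omega>)) t)"
    using Fubini_integral[OF integrable_frullani_pair[OF S a]] by simp
  also have "\<dots> = (CLINT t|lborel. indicator {0<..} t *\<^sub>R
      ((of_real (exp (- t)) - of_real (exp (- (t * a))) * (CLINT \<omega>|M. iexp ((- t) * S \<omega>))) / of_real t))"
    using expectation_frullani[OF _ borel_measurable_integrable[OF S]]
    by (intro Bochner_Integration.integral_cong refl) (simp split: split_indicator)
  finally show ?thesis .
qed

theorem theorem1p1:
  fixes M :: "'a measure" and L :: "nat \<Rightarrow> 'a \<Rightarrow> real"
    and l :: nat and x :: real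
  assumes "prob_space M"
    and "l \<ge> 1"
    and "x > real l / 2"
    and "prob_space.indep_vars M (\<lambda>_. borel) L {..<l}"
    and "\<And>i. i < l \<Longrightarrow> distributed M lborel (L i) (\<lambda>t. ennreal (rho1 t))"
  shows "prob_space.expectation M
           (\<lambda>\<omega>. Ln (complex_of_real (x - real l / 2) + \<i> * complex_of_real (\<Sum>i<l. L i \<omega>)))
         = complex_of_real
             (- harm (l - 1)
              + (deriv ^^ (l - 1))
                  (\<lambda>y. ((y - 1) gchoose (l - 1)) * Digamma (y - of_int \<lfloor>real l / 2\<rfloor>)) x)"
proof -
  interpret prob_space M by fact
  obtain n where n: "l = Suc n" using assms(2) by (cases l) auto
  define a where "a = x - real l / 2"
  have a: "a > 0" and x: "x = a + real (Suc n) / 2" using assms(3) by (simp_all add: a_def n)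
  define S where "S \<omega> = (\<Sum>i<l. L i \<omega>)" for \<omega>
  have S: "integrable M S"
    using distributed_integrable_var[OF assms(5) rho1_nonneg integrable_rho1_times_id]
    unfolding S_def by auto
  have integrand: "indicator {0<..} t *\<^sub>R
        ((of_real (exp (- t)) - of_real (exp (- (t * a))) * (CLINT \<omega>|M. iexp ((- t) * S \<omega>))) / of_real t)
      = indicator {0<..} t *\<^sub>R complex_of_real (log_integrand n x t)" for t
  proof (cases "t > 0")
    case True
    have "(CLINT \<omega>|M. iexp ((- t) * S \<omega>)) = complex_of_real (((t / 2) / sinh (t / 2)) ^ Suc n)"
      using char_sum_indep_rho1[OF assms(4) assms(5), of "- t"] True unfolding S_def by (simp add: n)
    thus ?thesis unfolding x log_integrand_eq_sinh[OF True, symmetric] by simp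
  qed simp
  have "expectation (\<lambda>\<omega>. Ln (complex_of_real a + \<i> * complex_of_real (S \<omega>)))
      = (CLINT t|lborel. indicator {0<..} t *\<^sub>R complex_of_real (log_integrand n x t))"
    unfolding expectation_Ln_eq_integral_char[OF S a] integrand ..
  also have "\<dots> = complex_of_real (log_integral n x)"
    using set_integral_complex_of_real[of lborel "{0<..}" "log_integrand n x"]
    by (simp add: log_integral_def set_lebesgue_integral_def)
  also have "log_integral n x = - harm n + (deriv ^^ n) (binom_Digamma n (real (l div 2))) x"
    using assms(3) by (intro log_integral_eq_higher_deriv) (auto simp: n real_of_nat_div)
  also have "real (l div 2) = of_int \<lfloor>real l / 2\<rfloor>"
    using floor_divide_of_nat_eq[of l 2, where 'a = real] by simp
  finally show ?thesis unfolding a_def S_def binom_Digamma_def[abs_def] n by simp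
qed

end
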